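(* Let $H=(E,\{X_i : i\in[n]\})$ be a hypergraph and let $t_1,\dots,t_n$ be integers with $0\le t_i\le |X_i|$, such that: (H2) $|X_i\cap X_j|\le 1$ for all distinct $i,j\in[n]$; (H3) there are no $a,b,c\in E$ such that $\{a,b\},\{a,c\},\{b,c\}$ are all hyperedges of $H$; (T) for each $i\in[n]$, either $t_i=1$ or $\min\{w(e) : e\in X_i\}\le t_i<|X_i|$. Let $\rho$ be the polymatroid on $E$ given by $\rho(A)=\sum_{i=1}^n\min\{|A\cap X_i|,t_i\}$ for $A\subseteq E$ (equivalently $\rho=\sum_{i=1}^n r_{M_i}$ with $M_i=U_{t_i,X_i}\oplus U_{0,E-X_i}$). Then for each positive integer $k$ there is a bijection from the set of proper $k$-colorings $c:[n]\to[k]$ of the line graph $G_H$ onto $\Delta_\rho^k$. Consequently, the least $k$ with $\rho\in\mathcal{D}_k$ is $k=\chi(G_H)$, and $|\Delta_\rho^k|=\chi(G_H;k)$ for every positive integer $k$.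
   Context: A polymatroid on a finite set $E$ is a function $\rho:2^E\to\mathbb{Z}$ that is normalized ($\rho(\emptyset)=0$), non-decreasing, and submodular. A hypergraph is a pair $H=(E,\mathcal{E})$ where $E$ is a finite set and $\mathcal{E}=\{X_i:i\in[n]\}$ is a set of nonempty subsets of $E$ (the hyperedges), $[n]=\{1,\dots,n\}$. For $e\in E$, $w(e)$ is the number of hyperedges containing $e$. The line graph $G_H$ has vertex set $[n]$, with $ij$ an edge iff $i\ne j$ and $X_i\cap X_j\ne\emptyset$. $U_{r,X}$ is the rank-$r$ uniform matroid on $X$ (bases are the $r$-subsets of $X$). For a polymatroid $\rho$ on $E$ and positive integer $k$, $\Delta_\rho^k$ is the set of $k$-tuples $(N_1,\dots,N_k)$ of matroids on $E$ with $\rho=r_{N_1}+\cdots+r_{N_k}$ (pointwise sum of rank functions). $\mathcal{D}_k$ is the class of polymatroids $\rho$ for which $\Delta_\rho^k\neq\emptyset$ ($k$-decomposable polymatroids). $\chi(G_H)$ and $\chi(G_H;k)$ are the chromatic number and chromatic polynomial of $G_H$. *)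

theory Defs
  imports Main "HOL-Library.FuncSet"
begin

definition hypergraph :: "'a set \<Rightarrow> nat \<Rightarrow> (nat \<Rightarrow> 'a set) \<Rightarrow> bool" where
  "hypergraph E n X \<longleftrightarrow> finite E \<and> inj_on X {1..n} \<and>
     (\<forall>i\<in>{1..n}. X i \<noteq> {} \<and> X i \<subseteq> E)"

definition hyperedges :: "nat \<Rightarrow> (nat \<Rightarrow> 'a set) \<Rightarrow> 'a set set" where
  "hyperedges n X = X ` {1..n}"

definition hweight :: "nat \<Rightarrow> (nat \<Rightarrow> 'a set) \<Rightarrow> 'a \<Rightarrow> nat" where
  "hweight n X e = card {i\<in>{1..n}. e \<in> X i}"

definition line_adj :: "(nat \<Rightarrow> 'a set) \<Rightarrow> nat \<Rightarrow> nat \<Rightarrow> bool" where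
  "line_adj X i j \<longleftrightarrow> i \<noteq> j \<and> X i \<inter> X j \<noteq> {}"

definition proper_colorings :: "nat \<Rightarrow> (nat \<Rightarrow> 'a set) \<Rightarrow> nat \<Rightarrow> (nat \<Rightarrow> nat) set" where
  "proper_colorings n X k = {c \<in> {1..n} \<rightarrow>\<^sub>E {1..k}.
      \<forall>i\<in>{1..n}. \<forall>j\<in>{1..n}. line_adj X i j \<longrightarrow> c i \<noteq> c j}"

definition chromatic_number :: "nat \<Rightarrow> (nat \<Rightarrow> 'a set) \<Rightarrow> nat" where
  "chromatic_number n X = (LEAST k. proper_colorings n X k \<noteq> {})"

definition chromatic_poly :: "nat \<Rightarrow> (nat \<Rightarrow> 'a set) \<Rightarrow> nat \<Rightarrow> nat" where
  "chromatic_poly n X k = card (proper_colorings n X k)"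

definition polymatroid :: "'a set \<Rightarrow> ('a set \<Rightarrow> int) \<Rightarrow> bool" where
  "polymatroid E r \<longleftrightarrow> r {} = 0 \<and>
     (\<forall>A B. A \<subseteq> B \<and> B \<subseteq> E \<longrightarrow> r A \<le> r B) \<and>
     (\<forall>A B. A \<subseteq> E \<and> B \<subseteq> E \<longrightarrow> r (A \<union> B) + r (A \<inter> B) \<le> r A + r B)"

text \<open>A matroid on E, represented by its rank function on 2^E (rank axioms);
  values outside 2^E are fixed to 0 so that a matroid is a unique object.\<close>
definition matroid_rank :: "'a set \<Rightarrow> ('a set \<Rightarrow> int) \<Rightarrow> bool" where
  "matroid_rank E r \<longleftrightarrow>
     (\<forall>A. A \<subseteq> E \<longrightarrow> 0 \<le> r A \<and> r A \<le> int (card A)) \<and>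
     (\<forall>A B. A \<subseteq> B \<and> B \<subseteq> E \<longrightarrow> r A \<le> r B) \<and>
     (\<forall>A B. A \<subseteq> E \<and> B \<subseteq> E \<longrightarrow> r (A \<union> B) + r (A \<inter> B) \<le> r A + r B) \<and>
     (\<forall>A. \<not> A \<subseteq> E \<longrightarrow> r A = 0)"

definition Delta :: "'a set \<Rightarrow> ('a set \<Rightarrow> int) \<Rightarrow> nat \<Rightarrow> ('a set \<Rightarrow> int) list set" where
  "Delta E \<rho> k = {Ns. length Ns = k \<and> (\<forall>N\<in>set Ns. matroid_rank E N) \<and>
      (\<forall>A. A \<subseteq> E \<longrightarrow> \<rho> A = (\<Sum>N\<leftarrow>Ns. N A))}"

definition decomposable :: "'a set \<Rightarrow> nat \<Rightarrow> ('a set \<Rightarrow> int) \<Rightarrow> bool" where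
  "decomposable E k \<rho> \<longleftrightarrow> Delta E \<rho> k \<noteq> {}"

end

theory Submission
  imports Defs
begin

text \<open>A proper \<open>k\<close>-coloring gives the decomposition whose \<open>j\<close>-th matroid is the direct sum of
  the \<open>U(t\<^sub>i, X\<^sub>i)\<close> over the edges of color \<open>j\<close>. Conversely, let \<open>\<rho> = N\<^sub>1 + \<dots> + N\<^sub>k\<close>.
  Counting nonloops and nullities against \<open>\<rho>\<close> shows that every edge \<open>X\<^sub>i\<close> with at least two
  elements has an owner \<open>N\<^sub>j\<close>: it restricts to \<open>U(t\<^sub>i, X\<^sub>i)\<close> on \<open>X\<^sub>i\<close>, while every other
  \<open>N\<^sub>c\<close> is free on \<open>X\<^sub>i\<close>. By induction on the size, every circuit with at least two
  elements lies in an edge: otherwise it would be a triangle of three edges of threshold 1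
  with a common owner, and (H3) together with a count of the matroids spanning the apex of the
  triangle rules this out. Hence each \<open>N\<^sub>j\<close> is bounded by the rank function of the edges
  owned by it (singleton edges take the one class left free by the other edges through their
  element); these edge colors form a proper coloring, and since both sides sum to \<open>\<rho>\<close> the
  bound is an equality.\<close>

section \<open>Matroid rank functions\<close>

context
  fixes E :: "'a set" and r :: "'a set \<Rightarrow> int"
  assumes matroid: "matroid_rank E r"
begin

lemma rank_nonneg: "A \<subseteq> E \<Longrightarrow> 0 \<le> r A"
  using matroid unfolding matroid_rank_def by simp

lemma rank_le_card: "A \<subseteq> E \<Longrightarrow> r A \<le> int (card A)"
  using matroid unfolding matroid_rank_def by simp

lemma rank_mono: "A \<subseteq> B \<Longrightarrow> B \<subseteq> E \<Longrightarrow> r A \<le> r B"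
  using matroid unfolding matroid_rank_def by simp

lemma rank_submod: "A \<subseteq> E \<Longrightarrow> B \<subseteq> E \<Longrightarrow> r (A \<union> B) + r (A \<inter> B) \<le> r A + r B"
  using matroid unfolding matroid_rank_def by simp

lemma rank_outside: "\<not> A \<subseteq> E \<Longrightarrow> r A = 0"
  using matroid unfolding matroid_rank_def by simp

lemma rank_empty: "r {} = 0"
  using rank_nonneg[of "{}"] rank_le_card[of "{}"] by simp

lemma rank_Un_le: "A \<subseteq> E \<Longrightarrow> B \<subseteq> E \<Longrightarrow> r (A \<union> B) \<le> r A + r B"
proof -
  assume "A \<subseteq> E" "B \<subseteq> E"
  then show ?thesis using rank_submod[of A B] rank_nonneg[of "A \<inter> B"] by force
qed

lemma rank_UN_le:
  assumes "finite F" "\<forall>i\<in>F. B i \<subseteq> E"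
  shows "r (\<Union>i\<in>F. B i) \<le> (\<Sum>i\<in>F. r (B i))"
  using assms
proof (induction F rule: finite_induct)
  case empty
  then show ?case using rank_empty by simp
next
  case (insert i F)
  have "r (B i \<union> (\<Union>j\<in>F. B j)) \<le> r (B i) + r (\<Union>j\<in>F. B j)"
    using insert.prems by (intro rank_Un_le) auto
  moreover have "r (\<Union>j\<in>F. B j) \<le> (\<Sum>j\<in>F. r (B j))"
    using insert.IH insert.prems by blast
  ultimately show ?case using insert.hyps by simp
qed

lemma rank_insert_eq_mono:
  assumes "A \<subseteq> B" "B \<subseteq> E" "x \<in> E" "r (insert x A) = r A"
  shows "r (insert x B) = r B"
proof -
  have "insert x A \<subseteq> E" using assms by blast
  moreover have "B \<union> insert x A = insert x B" using assms(1) by blast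
  ultimately have "r (insert x B) + r (B \<inter> insert x A) \<le> r B + r (insert x A)"
    using rank_submod[OF assms(2)] by metis
  moreover have "r A \<le> r (B \<inter> insert x A)" using assms by (intro rank_mono) auto
  moreover have "r B \<le> r (insert x B)" using assms by (intro rank_mono) auto
  ultimately show ?thesis using assms(4) by linarith
qed

lemma rank_Diff_eq_mono:
  assumes "S \<subseteq> A - {x}" "A \<subseteq> E" "x \<in> A" "r (insert x S) = r S"
  shows "r A = r (A - {x})"
proof -
  have "r (insert x (A - {x})) = r (A - {x})"
    by (rule rank_insert_eq_mono[of S]) (use assms in auto)
  then show ?thesis using assms(3) by (simp add: insert_absorb)
qed

lemma rank_Un_eq_if_insert_eq:
  assumes "finite B" "A \<subseteq> E" "B \<subseteq> E" "\<forall>x\<in>B. r (insert x A) = r A"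
  shows "r (A \<union> B) = r A"
  using assms
proof (induction B rule: finite_induct)
  case (insert y F)
  have "r (insert y (A \<union> F)) = r (A \<union> F)"
    by (rule rank_insert_eq_mono[of A]) (use insert.prems in auto)
  then show ?case using insert by simp
qed simp

lemma rank_le_if_covered_by_sharing:
  assumes "S1 \<subseteq> E" "S2 \<subseteq> E" "r S1 \<le> m" "r S2 \<le> m"
    and "Z \<subseteq> S1 \<inter> S2" "m \<le> r Z" "T \<subseteq> S1 \<union> S2"
  shows "r T \<le> m"
proof -
  have "r (S1 \<union> S2) + r (S1 \<inter> S2) \<le> r S1 + r S2" using rank_submod assms by blast
  moreover have "r Z \<le> r (S1 \<inter> S2)" "r T \<le> r (S1 \<union> S2)"
    using assms by (auto intro: rank_mono)
  ultimately show ?thesis using assms by linarith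
qed

end

text \<open>Loops are invisible to \<open>nonloop_nullity\<close>, so the \<open>nonloop_circuit\<close>s are
  exactly the circuits with at least two elements.\<close>

definition nonloops :: "'a set \<Rightarrow> ('a set \<Rightarrow> int) \<Rightarrow> 'a set" where
  "nonloops E r = {x\<in>E. r {x} = 1}"

definition nonloop_nullity :: "'a set \<Rightarrow> ('a set \<Rightarrow> int) \<Rightarrow> 'a set \<Rightarrow> int" where
  "nonloop_nullity E r A = int (card (A \<inter> nonloops E r)) - r A"

definition nonloop_circuit :: "'a set \<Rightarrow> ('a set \<Rightarrow> int) \<Rightarrow> 'a set \<Rightarrow> bool" where
  "nonloop_circuit E r C \<longleftrightarrow> C \<subseteq> E \<and> 0 < nonloop_nullity E r C \<and>
     (\<forall>B. B \<subset> C \<longrightarrow> nonloop_nullity E r B = 0)"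

context
  fixes E :: "'a set" and r :: "'a set \<Rightarrow> int"
  assumes matroid: "matroid_rank E r" and finite: "finite E"
begin

abbreviation (input) "L \<equiv> nonloops E r"
abbreviation (input) "\<nu> \<equiv> nonloop_nullity E r"

lemma rank_singleton: "x \<in> E \<Longrightarrow> r {x} = of_bool (x \<in> L)"
  using rank_nonneg[OF matroid, of "{x}"] rank_le_card[OF matroid, of "{x}"]
  unfolding nonloops_def by auto

lemma rank_Diff_singleton:
  assumes "A \<subseteq> E"
  shows "r (A - {x}) \<le> r A \<and> r A \<le> r (A - {x}) + of_bool (x \<in> L)"
proof (cases "x \<in> A")
  case True
  have "r ((A - {x}) \<union> {x}) \<le> r (A - {x}) + r {x}"
    using assms True by (intro rank_Un_le[OF matroid]) auto
  then have "r A \<le> r (A - {x}) + r {x}"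
    using True by (simp add: insert_absorb)
  then show ?thesis
    using rank_singleton[of x] rank_mono[OF matroid, of "A - {x}" A] True assms by auto
next
  case False
  then have "A - {x} = A" by blast
  then show ?thesis by simp
qed

lemma rank_restrict_nonloops:
  assumes "A \<subseteq> E"
  shows "r A = r (A \<inter> L)"
proof -
  have "r (insert x (A \<inter> L)) = r (A \<inter> L)" if "x \<in> A - L" for x
  proof -
    have "insert x (A \<inter> L) - {x} = A \<inter> L" using that by blast
    moreover have "insert x (A \<inter> L) \<subseteq> E" using that assms by blast
    ultimately show ?thesis using rank_Diff_singleton[of "insert x (A \<inter> L)" x] that by simp
  qed
  then have "r ((A \<inter> L) \<union> (A - L)) = r (A \<inter> L)"
    using assms finite_subset[OF _ finite] by (intro rank_Un_eq_if_insert_eq[OF matroid]) auto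
  moreover have "(A \<inter> L) \<union> (A - L) = A" by blast
  ultimately show ?thesis by simp
qed

lemma nullity_nonneg: "A \<subseteq> E \<Longrightarrow> 0 \<le> \<nu> A"
  using rank_restrict_nonloops[of A] rank_le_card[OF matroid, of "A \<inter> L"]
  unfolding nonloop_nullity_def by auto

lemma nullity_empty: "\<nu> {} = 0"
  unfolding nonloop_nullity_def using rank_empty[OF matroid] by simp

lemma nullity_mono:
  assumes "A \<subseteq> B" "B \<subseteq> E"
  shows "\<nu> A \<le> \<nu> B"
proof -
  have split: "B \<inter> L = (A \<inter> L) \<union> ((B - A) \<inter> L)" using assms by blast
  have fin: "finite B" using assms finite_subset[OF _ finite] by blast
  have "r B = r ((A \<inter> L) \<union> ((B - A) \<inter> L))"
    using rank_restrict_nonloops[of B] assms split by simp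
  also have "\<dots> \<le> r (A \<inter> L) + r ((B - A) \<inter> L)"
    using assms by (intro rank_Un_le[OF matroid]) auto
  also have "\<dots> \<le> r A + int (card ((B - A) \<inter> L))"
    using rank_restrict_nonloops[of A] rank_le_card[OF matroid, of "(B - A) \<inter> L"] assms by auto
  finally have "r B \<le> r A + int (card ((B - A) \<inter> L))" .
  moreover have "card (B \<inter> L) = card (A \<inter> L) + card ((B - A) \<inter> L)"
    unfolding split using fin finite_subset[of _ B] assms by (intro card_Un_disjoint) auto
  ultimately show ?thesis unfolding nonloop_nullity_def by simp
qed

lemma nullity_supermod:
  assumes "A \<subseteq> E" "B \<subseteq> E"
  shows "\<nu> A + \<nu> B \<le> \<nu> (A \<union> B) + \<nu> (A \<inter> B)"
proof -
  have "finite A" "finite B" using assms finite_subset[OF _ finite] by auto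
  then have "card ((A \<inter> L) \<union> (B \<inter> L)) + card ((A \<inter> L) \<inter> (B \<inter> L)) =
      card (A \<inter> L) + card (B \<inter> L)"
    by (intro card_Un_Int[symmetric]) auto
  moreover have "(A \<inter> L) \<union> (B \<inter> L) = (A \<union> B) \<inter> L" "(A \<inter> L) \<inter> (B \<inter> L) = (A \<inter> B) \<inter> L"
    by blast+
  ultimately show ?thesis
    using rank_submod[OF matroid assms] unfolding nonloop_nullity_def by simp
qed

lemma nullity_Diff_loop:
  assumes "A \<subseteq> E" "x \<notin> L"
  shows "\<nu> (A - {x}) = \<nu> A"
proof -
  have "(A - {x}) \<inter> L = A \<inter> L" using assms(2) by blast
  moreover have "r (A - {x}) = r A" using rank_Diff_singleton[OF assms(1), of x] assms(2) by simp
  ultimately show ?thesis unfolding nonloop_nullity_def by simp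
qed

lemma nullity_Diff_nonloop:
  assumes "A \<subseteq> E" "x \<in> A" "x \<in> L"
  shows "\<nu> A = \<nu> (A - {x}) + 1 - (r A - r (A - {x}))"
proof -
  have "A \<inter> L = insert x ((A - {x}) \<inter> L)" using assms by blast
  then have "card (A \<inter> L) = card ((A - {x}) \<inter> L) + 1"
    using assms finite_subset[OF _ finite] by simp
  then show ?thesis unfolding nonloop_nullity_def by simp
qed

lemma nonloop_circuit_exists:
  "A \<subseteq> E \<Longrightarrow> 0 < \<nu> A \<Longrightarrow> \<exists>C\<subseteq>A. nonloop_circuit E r C"
proof (induction "card A" arbitrary: A rule: less_induct)
  case less
  show ?case
  proof (cases "\<forall>B. B \<subset> A \<longrightarrow> \<nu> B = 0")
    case True
    then show ?thesis using less.prems unfolding nonloop_circuit_def by blast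
  next
    case False
    then obtain B where B: "B \<subset> A" "\<nu> B \<noteq> 0" by blast
    have BE: "B \<subseteq> E" using B(1) less.prems(1) by blast
    then have "0 < \<nu> B" using nullity_nonneg[OF BE] B(2) by linarith
    moreover have "card B < card A"
      using B less.prems finite_subset[OF _ finite] by (intro psubset_card_mono) auto
    ultimately show ?thesis using less.hyps[OF _ BE] B(1) by blast
  qed
qed

context
  fixes C assumes circuit: "nonloop_circuit E r C"
begin

lemma nonloop_circuit_subset_nonloops: "C \<subseteq> L"
proof
  fix x assume "x \<in> C"
  then have "\<nu> (C - {x}) = 0" using circuit unfolding nonloop_circuit_def by blast
  then show "x \<in> L"
    using nullity_Diff_loop[of C x] circuit unfolding nonloop_circuit_def by auto
qed

lemma nonloop_circuit_rank_Diff_and_nullity: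
  assumes "x \<in> C"
  shows "r C = r (C - {x}) \<and> \<nu> C = 1"
proof -
  have CE: "C \<subseteq> E" and pos: "0 < \<nu> C" and "\<nu> (C - {x}) = 0"
    using circuit assms unfolding nonloop_circuit_def by auto
  moreover have "x \<in> L" using nonloop_circuit_subset_nonloops assms by blast
  ultimately show ?thesis
    using nullity_Diff_nonloop[OF CE assms] rank_Diff_singleton[OF CE, of x] by auto
qed

lemma nonloop_circuit_rank_Diff: "x \<in> C \<Longrightarrow> r C = r (C - {x})"
  using nonloop_circuit_rank_Diff_and_nullity by blast

lemma nonloop_circuit_nullity: "\<nu> C = 1"
proof -
  have "C \<noteq> {}" using circuit nullity_empty unfolding nonloop_circuit_def by auto
  then show ?thesis using nonloop_circuit_rank_Diff_and_nullity by blast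
qed

lemma nonloop_circuit_rank: "r C = int (card C) - 1"
  using nonloop_circuit_nullity nonloop_circuit_subset_nonloops
  unfolding nonloop_nullity_def by (simp add: Int_absorb2)

lemma nonloop_circuit_card: "2 \<le> card C"
proof (rule ccontr)
  assume "\<not> 2 \<le> card C"
  moreover have "C \<noteq> {}" using circuit nullity_empty unfolding nonloop_circuit_def by auto
  moreover have "finite C" using circuit finite_subset[OF _ finite] unfolding nonloop_circuit_def by blast
  ultimately have "card C = 1" by (metis card_0_eq less_2_cases not_le One_nat_def)
  then obtain y where "C = {y}" by (rule card_1_singletonE)
  then show False
    using nonloop_circuit_nullity nonloop_circuit_subset_nonloops rank_singleton[of y] circuit
    unfolding nonloop_nullity_def nonloop_circuit_def by auto
qed

end

lemma nullity_Diff_less: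
  assumes "T \<subseteq> E" "0 < \<nu> T"
  shows "\<exists>y\<in>T. \<nu> (T - {y}) < \<nu> T"
proof -
  obtain U where U: "U \<subseteq> T" "nonloop_circuit E r U" using nonloop_circuit_exists assms by blast
  then obtain y where y: "y \<in> U" using nonloop_circuit_card[OF U(2)] by fastforce
  have "\<nu> (T - {y}) + \<nu> U \<le> \<nu> ((T - {y}) \<union> U) + \<nu> ((T - {y}) \<inter> U)"
    using assms U by (intro nullity_supermod) auto
  moreover have "(T - {y}) \<union> U = T" "(T - {y}) \<inter> U = U - {y}" using U y by blast+
  moreover have "\<nu> (U - {y}) = 0" using U(2) y unfolding nonloop_circuit_def by blast
  ultimately have "\<nu> (T - {y}) < \<nu> T" using nonloop_circuit_nullity[OF U(2)] by simp
  then show ?thesis using y U(1) by blast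
qed

context
  fixes A x
  assumes A: "A \<subseteq> E" and x: "x \<in> A" "x \<in> L" and spans: "r A = r (A - {x})"
    and separates: "\<And>y. y \<in> A \<Longrightarrow> y \<noteq> x \<Longrightarrow> r (A - {y}) = r (A - {y} - {x}) + 1"
begin

lemma nullity_Diff_eq_0_if_deletions_separate: "\<nu> (A - {x}) = 0"
proof (rule ccontr)
  assume "\<nu> (A - {x}) \<noteq> 0"
  then have "0 < \<nu> (A - {x})" using nullity_nonneg[of "A - {x}"] A by force
  then obtain y where y: "y \<in> A - {x}" "\<nu> (A - {x} - {y}) < \<nu> (A - {x})"
    using nullity_Diff_less[of "A - {x}"] A by blast
  then have "y \<in> L" using nullity_Diff_loop[of "A - {x}" y] A by force
  then have "\<nu> (A - {x}) = \<nu> (A - {x} - {y}) + 1 - (r (A - {x}) - r (A - {x} - {y}))"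
    using nullity_Diff_nonloop[of "A - {x}" y] y A by blast
  moreover have "r (A - {x} - {y}) \<le> r (A - {x})" using rank_Diff_singleton[of "A - {x}" y] A by blast
  ultimately have "r (A - {x} - {y}) = r (A - {x})" using y by linarith
  moreover have "A - {x} - {y} = A - {y} - {x}" by blast
  ultimately have "r (A - {y}) = r A + 1" using separates[of y] y spans by simp
  moreover have "r (A - {y}) \<le> r A" using rank_Diff_singleton[OF A, of y] by blast
  ultimately show False by simp
qed

lemma nonloop_circuit_if_deletions_separate: "nonloop_circuit E r A"
proof -
  note independent = nullity_Diff_eq_0_if_deletions_separate
  have "\<nu> B = 0" if B: "B \<subset> A" for B
  proof (cases "x \<in> B")
    case False
    then have "\<nu> B \<le> \<nu> (A - {x})" using B A by (intro nullity_mono) auto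
    then show ?thesis using independent nullity_nonneg[of B] B A by force
  next
    case True
    obtain y where y: "y \<in> A" "y \<notin> B" using B by blast
    have "r B \<noteq> r (B - {x})"
    proof
      assume "r B = r (B - {x})"
      then have "r (insert x (B - {x})) = r (B - {x})" using True by (simp add: insert_absorb)
      then have "r (A - {y}) = r (A - {y} - {x})"
        using y True x B A by (intro rank_Diff_eq_mono[OF matroid, of "B - {x}"]) auto
      moreover have "y \<noteq> x" using y True by blast
      ultimately show False using separates[of y] y by simp
    qed
    then have "r B = r (B - {x}) + 1" using rank_Diff_singleton[of B x] B A x by force
    then have "\<nu> B = \<nu> (B - {x})" using nullity_Diff_nonloop[of B x] B A True x by force
    also have "\<dots> \<le> \<nu> (A - {x})" using B A by (intro nullity_mono) auto
    finally show ?thesis using independent nullity_nonneg[of B] B A by force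
  qed
  moreover have "\<nu> A = 1" using nullity_Diff_nonloop[OF A x] independent spans by simp
  ultimately show ?thesis using A unfolding nonloop_circuit_def by simp
qed

end

lemma nonloop_circuit_through:
  "A \<subseteq> E \<Longrightarrow> x \<in> A \<Longrightarrow> x \<in> L \<Longrightarrow> r A = r (A - {x}) \<Longrightarrow>
    \<exists>C. nonloop_circuit E r C \<and> x \<in> C \<and> C \<subseteq> A"
proof (induction "card A" arbitrary: A rule: less_induct)
  case less
  show ?case
  proof (cases "\<exists>y\<in>A - {x}. r (A - {y}) = r (A - {y} - {x})")
    case True
    then obtain y where y: "y \<in> A" "y \<noteq> x" "r (A - {y}) = r (A - {y} - {x})" by blast
    have "card (A - {y}) < card A"
      using y less.prems finite_subset[OF _ finite] by (intro card_Diff1_less) auto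
    then show ?thesis using less.hyps[of "A - {y}"] less.prems y by blast
  next
    case False
    have "r (A - {y}) = r (A - {y} - {x}) + 1" if "y \<in> A" "y \<noteq> x" for y
      using False that rank_Diff_singleton[of "A - {y}" x] less.prems by force
    then show ?thesis using nonloop_circuit_if_deletions_separate less.prems by blast
  qed
qed

end

section \<open>The hypergraph and the polymatroid\<close>

lemma exists_other_if_two_le_card:
  assumes "2 \<le> card S"
  shows "\<exists>y\<in>S. y \<noteq> x"
proof (rule ccontr)
  assume "\<not> ?thesis"
  then have "S \<subseteq> {x}" by blast
  then have "card S \<le> 1" using card_mono[of "{x}" S] by simp
  then show False using assms by simp
qed

locale thresholded_hypergraph =
  fixes E :: "'a set" and n :: nat and X :: "nat \<Rightarrow> 'a set" and t :: "nat \<Rightarrow> nat"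
  assumes hypergraph: "hypergraph E n X"
    and threshold_le_card: "\<forall>i\<in>{1..n}. t i \<le> card (X i)"
    and edges_meet_at_most_once: "\<forall>i\<in>{1..n}. \<forall>j\<in>{1..n}. i \<noteq> j \<longrightarrow> card (X i \<inter> X j) \<le> 1"
    and no_triangle: "\<not> (\<exists>a\<in>E. \<exists>b\<in>E. \<exists>c\<in>E. a \<noteq> b \<and> a \<noteq> c \<and> b \<noteq> c \<and>
               {a, b} \<in> hyperedges n X \<and> {a, c} \<in> hyperedges n X \<and> {b, c} \<in> hyperedges n X)"
    and threshold_cond: "\<forall>i\<in>{1..n}. t i = 1 \<or> (Min (hweight n X ` X i) \<le> t i \<and> t i < card (X i))"
begin

abbreviation "I \<equiv> {1..n}"

lemma finite_ground: "finite E"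
  using hypergraph unfolding hypergraph_def by blast

lemma edge_subset: "i \<in> I \<Longrightarrow> X i \<subseteq> E"
  using hypergraph unfolding hypergraph_def by blast

lemma edge_nonempty: "i \<in> I \<Longrightarrow> X i \<noteq> {}"
  using hypergraph unfolding hypergraph_def by blast

lemma inj_edges: "inj_on X I"
  using hypergraph unfolding hypergraph_def by blast

lemma finite_subset_ground: "A \<subseteq> E \<Longrightarrow> finite A"
  using finite_ground finite_subset by blast

lemma finite_edge: "i \<in> I \<Longrightarrow> finite (X i)"
  using edge_subset finite_subset_ground by blast

lemma hweight_pos: "e \<in> X i \<Longrightarrow> i \<in> I \<Longrightarrow> 0 < hweight n X e"
  unfolding hweight_def by (subst card_gt_0_iff) auto

text \<open>The weight condition in \<open>threshold_cond\<close> is used only through its consequence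
  \<open>t\<^sub>i \<ge> 1\<close>.\<close>

lemma threshold_pos: "i \<in> I \<Longrightarrow> 1 \<le> t i"
proof -
  assume i: "i \<in> I"
  have "0 < Min (hweight n X ` X i)"
    using finite_edge[OF i] edge_nonempty[OF i] hweight_pos i by simp
  then show ?thesis using threshold_cond i by fastforce
qed

lemma threshold_less_card: "i \<in> I \<Longrightarrow> 2 \<le> card (X i) \<Longrightarrow> t i < card (X i)"
  using threshold_cond by fastforce

lemma threshold_singleton_edge: "i \<in> I \<Longrightarrow> card (X i) < 2 \<Longrightarrow> t i = 1"
  using threshold_le_card threshold_pos[of i] by force

lemma singleton_edge:
  assumes "i \<in> I" "\<not> 2 \<le> card (X i)"
  shows "X i = {the_elem (X i)}"
proof -
  have "card (X i) \<noteq> 0" using edge_nonempty[of i] finite_edge[of i] assms(1) by simp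
  then have "card (X i) = 1" using assms(2) by linarith
  then obtain x where "X i = {x}" by (rule card_1_singletonE)
  then show ?thesis by simp
qed

lemma singleton_edge_mem:
  assumes "i \<in> I" "\<not> 2 \<le> card (X i)" "x \<in> X i"
  shows "X i = {x}"
proof -
  obtain y where "X i = {y}" using singleton_edge[OF assms(1,2)] by blast
  then show ?thesis using assms(3) by simp
qed

lemma card_edges_inter_le_1: "i \<in> I \<Longrightarrow> j \<in> I \<Longrightarrow> i \<noteq> j \<Longrightarrow> card (X i \<inter> X j) \<le> 1"
  using edges_meet_at_most_once by simp

lemma edges_eq_if_two_common:
  assumes "i \<in> I" "j \<in> I" "x \<in> X i" "x \<in> X j" "y \<in> X i" "y \<in> X j" "x \<noteq> y"
  shows "i = j"
proof (rule ccontr)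
  assume "i \<noteq> j"
  then have "card (X i \<inter> X j) \<le> 1" using card_edges_inter_le_1 assms by simp
  moreover have "card {x, y} \<le> card (X i \<inter> X j)"
    using assms finite_edge by (intro card_mono) auto
  ultimately show False using assms(7) by simp
qed

lemma edges_inter_eq_singleton:
  assumes "i \<in> I" "j \<in> I" "i \<noteq> j" "x \<in> X i" "x \<in> X j"
  shows "X i \<inter> X j = {x}"
proof (intro equalityI subsetI)
  fix y assume "y \<in> X i \<inter> X j"
  then show "y \<in> {x}" using edges_eq_if_two_common[of i j x y] assms by auto
qed (use assms in auto)

definition rho :: "'a set \<Rightarrow> int" where
  "rho A = (\<Sum>i\<in>I. int (min (card (A \<inter> X i)) (t i)))"

definition excess :: "'a set \<Rightarrow> int" where
  "excess A = (\<Sum>i\<in>I. int (card (A \<inter> X i) - min (card (A \<inter> X i)) (t i)))"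

text \<open>Exactly the edges \<open>X\<^sub>i\<close> through \<open>x\<close> whose uniform matroid \<open>U(t\<^sub>i, X\<^sub>i)\<close> does not lose rank
  when \<open>x\<close> is removed from \<open>A\<close>.\<close>

definition saturated_edges :: "'a set \<Rightarrow> 'a \<Rightarrow> nat set" where
  "saturated_edges A x = {i\<in>I. x \<in> X i \<and> t i < card (A \<inter> X i)}"

lemma finite_saturated_edges: "finite (saturated_edges A x)"
  unfolding saturated_edges_def by simp

lemma saturated_edge_card: "i \<in> saturated_edges A x \<Longrightarrow> 2 \<le> card (A \<inter> X i)"
  using threshold_pos unfolding saturated_edges_def by fastforce

lemma saturated_edge_threshold_1: "i \<in> saturated_edges A x \<Longrightarrow> card (A \<inter> X i) \<le> 2 \<Longrightarrow> t i = 1"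
  using threshold_pos unfolding saturated_edges_def by fastforce

lemma saturated_edge_big: "i \<in> saturated_edges A x \<Longrightarrow> 2 \<le> card (X i)"
  using saturated_edge_card[of i A x] card_mono[OF finite_edge, of i "A \<inter> X i"]
  unfolding saturated_edges_def by fastforce

lemma sum_hweight:
  assumes "A \<subseteq> E"
  shows "(\<Sum>x\<in>A. int (hweight n X x)) = (\<Sum>i\<in>I. int (card (A \<inter> X i)))"
proof -
  have "(\<Sum>x\<in>A. int (hweight n X x)) = (\<Sum>x\<in>A. \<Sum>i\<in>I. of_bool (x \<in> X i))"
    unfolding hweight_def by (simp add: Int_def)
  also have "\<dots> = (\<Sum>i\<in>I. \<Sum>x\<in>A. of_bool (x \<in> X i))" by (rule sum.swap)
  also have "\<dots> = (\<Sum>i\<in>I. int (card (A \<inter> X i)))"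
    using finite_subset_ground[OF assms] by (simp add: Int_def)
  finally show ?thesis .
qed

lemma rho_singleton: "rho {x} = int (hweight n X x)"
proof -
  have "rho {x} = (\<Sum>i\<in>I. of_bool (x \<in> X i))"
    unfolding rho_def using threshold_pos by (intro sum.cong) auto
  then show ?thesis unfolding hweight_def by (simp add: Int_def)
qed

lemma rho_Diff_singleton:
  assumes "x \<in> A"
  shows "rho A - rho (A - {x}) = int (hweight n X x) - int (card (saturated_edges A x))"
proof -
  have "rho A - rho (A - {x}) =
      (\<Sum>i\<in>I. of_bool (x \<in> X i) - of_bool (i \<in> saturated_edges A x))"
    unfolding rho_def sum_subtractf[symmetric]
  proof (rule sum.cong)
    fix i assume i: "i \<in> I"
    show "int (min (card (A \<inter> X i)) (t i)) - int (min (card ((A - {x}) \<inter> X i)) (t i)) =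
        of_bool (x \<in> X i) - of_bool (i \<in> saturated_edges A x)"
    proof (cases "x \<in> X i")
      case True
      have "(A - {x}) \<inter> X i = (A \<inter> X i) - {x}" "x \<in> A \<inter> X i" using True assms by auto
      then have "card ((A - {x}) \<inter> X i) = card (A \<inter> X i) - 1" "1 \<le> card (A \<inter> X i)"
        using finite_edge[OF i] by (auto simp: card_gt_0_iff Suc_le_eq)
      then show ?thesis using True i unfolding saturated_edges_def by auto
    next
      case False
      then have "(A - {x}) \<inter> X i = A \<inter> X i" by blast
      then show ?thesis using False unfolding saturated_edges_def by simp
    qed
  qed simp
  also have "\<dots> = int (hweight n X x) - int (card (saturated_edges A x))"
    unfolding sum_subtractf hweight_def saturated_edges_def by (simp add: Int_def)
  finally show ?thesis .
qed

lemma excess_subset_edge: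
  assumes i: "i \<in> I" and A: "A \<subseteq> X i"
  shows "excess A = int (card A) - int (min (card A) (t i))"
proof -
  have "card (A \<inter> X l) - min (card (A \<inter> X l)) (t l) = 0" if l: "l \<in> I" "l \<noteq> i" for l
  proof -
    have "card (A \<inter> X l) \<le> card (X i \<inter> X l)"
      using A finite_edge[OF i] by (intro card_mono) auto
    also have "\<dots> \<le> 1" using card_edges_inter_le_1 i l by simp
    finally show ?thesis using threshold_pos[OF l(1)] by simp
  qed
  then have "(\<Sum>l\<in>I - {i}. int (card (A \<inter> X l) - min (card (A \<inter> X l)) (t l))) = 0"
    by (intro sum.neutral) auto
  moreover have "excess A = int (card (A \<inter> X i) - min (card (A \<inter> X i)) (t i)) +
      (\<Sum>l\<in>I - {i}. int (card (A \<inter> X l) - min (card (A \<inter> X l)) (t l)))"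
    unfolding excess_def using i by (intro sum.remove) auto
  moreover have "A \<inter> X i = A" using A by blast
  ultimately show ?thesis by simp
qed

lemma excess_pos_imp_saturated:
  assumes "0 < excess A"
  shows "\<exists>i\<in>I. t i < card (A \<inter> X i)"
proof (rule ccontr)
  assume "\<not> ?thesis"
  then have "excess A = 0" unfolding excess_def by (intro sum.neutral) auto
  then show False using assms by simp
qed

lemma inter_eq_pair_if_covered:
  assumes I: "i \<in> I" "i' \<in> I" "p \<in> I" "p \<noteq> i'" and meet: "X i \<inter> X i' = {x}"
    and cover: "C \<subseteq> X p \<union> X i" and x: "x \<in> C" and two: "2 \<le> card (C \<inter> X i')"
  shows "\<exists>y. C \<inter> X i' = {x, y} \<and> y \<noteq> x \<and> y \<in> X p"
proof -
  have outside_Xi: "z \<in> X p" if "z \<in> C \<inter> X i'" "z \<noteq> x" for z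
    using that meet cover by blast
  obtain y where y: "y \<in> C \<inter> X i'" "y \<noteq> x" using exists_other_if_two_le_card[OF two] by blast
  then have "X p \<inter> X i' = {y}" using edges_inter_eq_singleton[OF I(3,2,4)] outside_Xi by blast
  then have "C \<inter> X i' \<subseteq> {x, y}" using outside_Xi by blast
  moreover have "x \<in> X i'" using meet by blast
  ultimately have "C \<inter> X i' = {x, y}" using x y by blast
  then show ?thesis using y outside_Xi by blast
qed

text \<open>The rank function of the direct sum of the \<open>U(t\<^sub>i, X\<^sub>i)\<close> over the edges of color \<open>c\<close>,
  extended by 0 outside \<open>2\<^sup>E\<close> like every \<open>matroid_rank\<close>.\<close>

definition class_rank :: "(nat \<Rightarrow> nat) \<Rightarrow> nat \<Rightarrow> 'a set \<Rightarrow> int" where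
  "class_rank col c A =
     (if A \<subseteq> E then (\<Sum>i\<in>{i\<in>I. col i = c}. int (min (card (A \<inter> X i)) (t i))) else 0)"

lemma sum_class_rank:
  assumes "col ` I \<subseteq> {1..k}" "A \<subseteq> E"
  shows "(\<Sum>c\<in>{1..k}. class_rank col c A) = rho A"
proof -
  have "(\<Sum>c\<in>{1..k}. class_rank col c A) =
      (\<Sum>c\<in>{1..k}. \<Sum>i\<in>{i\<in>I. col i = c}. int (min (card (A \<inter> X i)) (t i)))"
    unfolding class_rank_def using assms(2) by simp
  also have "\<dots> = rho A" unfolding rho_def by (rule sum.group) (use assms(1) in auto)
  finally show ?thesis .
qed

end

section \<open>Decompositions of the polymatroid: owners of edges\<close>

locale rho_decomposition = thresholded_hypergraph +
  fixes k :: nat and N :: "nat \<Rightarrow> 'a set \<Rightarrow> int"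
  assumes matroid_N: "j \<in> {1..k} \<Longrightarrow> matroid_rank E (N j)"
    and rho_eq_sum: "A \<subseteq> E \<Longrightarrow> rho A = (\<Sum>j\<in>{1..k}. N j A)"
begin

abbreviation "J \<equiv> {1..k}"
abbreviation "NL j \<equiv> nonloops E (N j)"
abbreviation "nul j \<equiv> nonloop_nullity E (N j)"

lemma rank_N_mono: "j \<in> J \<Longrightarrow> A \<subseteq> B \<Longrightarrow> B \<subseteq> E \<Longrightarrow> N j A \<le> N j B"
  using rank_mono[OF matroid_N] .

lemma rank_N_singleton: "j \<in> J \<Longrightarrow> x \<in> E \<Longrightarrow> N j {x} = of_bool (x \<in> NL j)"
  using rank_singleton[OF matroid_N finite_ground] .

definition spanning_classes :: "'a set \<Rightarrow> 'a \<Rightarrow> nat set" where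
  "spanning_classes A x = {j\<in>J. x \<in> NL j \<and> N j A = N j (A - {x})}"

lemma finite_spanning_classes: "finite (spanning_classes A x)"
  unfolding spanning_classes_def by simp

lemma card_nonloop_classes:
  assumes "x \<in> E"
  shows "card {j\<in>J. x \<in> NL j} = hweight n X x"
proof -
  have "int (hweight n X x) = (\<Sum>j\<in>J. N j {x})"
    using rho_singleton[of x] rho_eq_sum[of "{x}"] assms by simp
  also have "\<dots> = (\<Sum>j\<in>J. of_bool (x \<in> NL j))"
    using rank_singleton[OF matroid_N finite_ground] assms by simp
  finally show ?thesis by (simp add: Int_def)
qed

lemma sum_nullity:
  assumes "A \<subseteq> E"
  shows "(\<Sum>j\<in>J. nul j A) = excess A"
proof -
  have "(\<Sum>j\<in>J. int (card (A \<inter> NL j))) = (\<Sum>j\<in>J. \<Sum>x\<in>A. of_bool (x \<in> NL j))"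
    using finite_subset_ground[OF assms] by (simp add: Int_def)
  also have "\<dots> = (\<Sum>x\<in>A. \<Sum>j\<in>J. of_bool (x \<in> NL j))" by (rule sum.swap)
  also have "\<dots> = (\<Sum>x\<in>A. int (hweight n X x))"
    using card_nonloop_classes assms by (intro sum.cong) (auto simp: Int_def)
  also have "\<dots> = (\<Sum>i\<in>I. int (card (A \<inter> X i)))" by (rule sum_hweight[OF assms])
  finally have "(\<Sum>j\<in>J. int (card (A \<inter> NL j))) = (\<Sum>i\<in>I. int (card (A \<inter> X i)))" .
  moreover have "excess A = (\<Sum>i\<in>I. int (card (A \<inter> X i))) - rho A"
    unfolding excess_def rho_def sum_subtractf[symmetric] by (intro sum.cong) auto
  ultimately show ?thesis
    using rho_eq_sum[OF assms] unfolding nonloop_nullity_def by (simp add: sum_subtractf)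
qed

lemma nullity_le_excess:
  assumes "j \<in> J" "A \<subseteq> E"
  shows "nul j A \<le> excess A"
proof -
  have "nul j A \<le> (\<Sum>c\<in>J. nul c A)"
    using assms nullity_nonneg[OF matroid_N finite_ground] by (intro member_le_sum) auto
  then show ?thesis using sum_nullity assms by simp
qed

text \<open>Both sides equal \<open>w(x) - (\<rho>(A) - \<rho>(A - {x}))\<close>: deleting \<open>x\<close> from \<open>A\<close> lowers the rank
  of each class in which \<open>x\<close> is a nonloop, and of each edge through \<open>x\<close>, by at most 1.\<close>

lemma card_spanning_classes:
  assumes A: "A \<subseteq> E" and x: "x \<in> A"
  shows "card (spanning_classes A x) = card (saturated_edges A x)"
proof -
  let ?drop = "{j\<in>J. x \<in> NL j \<and> N j A \<noteq> N j (A - {x})}"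
  have "rho A - rho (A - {x}) = (\<Sum>j\<in>J. N j A - N j (A - {x}))"
    using rho_eq_sum[OF A] rho_eq_sum[of "A - {x}"] A by (auto simp: sum_subtractf)
  also have "\<dots> = (\<Sum>j\<in>J. of_bool (j \<in> ?drop))"
  proof (rule sum.cong)
    fix j assume "j \<in> J"
    then show "N j A - N j (A - {x}) = of_bool (j \<in> ?drop)"
      using rank_Diff_singleton[OF matroid_N finite_ground A, of j x] by auto
  qed simp
  also have "\<dots> = int (card ?drop)" by (simp add: Int_def)
  finally have "int (card ?drop) = int (hweight n X x) - int (card (saturated_edges A x))"
    using rho_Diff_singleton[OF x] by simp
  moreover have "card {j\<in>J. x \<in> NL j} = card (spanning_classes A x) + card ?drop"
    unfolding spanning_classes_def by (subst card_Un_disjoint[symmetric]) (auto intro: arg_cong[where f=card])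
  ultimately show ?thesis using card_nonloop_classes x A by auto
qed

lemma spanning_class_other:
  assumes "A \<subseteq> E" "x \<in> A" "i \<in> saturated_edges A x" "i' \<in> saturated_edges A x" "i \<noteq> i'"
  shows "\<exists>c\<in>spanning_classes A x. c \<noteq> c0"
proof -
  have "card {i, i'} \<le> card (saturated_edges A x)"
    using assms finite_saturated_edges by (intro card_mono) auto
  then have "2 \<le> card (spanning_classes A x)"
    using card_spanning_classes assms by simp
  moreover have "card (spanning_classes A x) \<le> 1" if "spanning_classes A x \<subseteq> {c0}"
    using card_mono[OF _ that] by simp
  ultimately show ?thesis by force
qed

lemma nullity_N_nonneg: "j \<in> J \<Longrightarrow> A \<subseteq> E \<Longrightarrow> 0 \<le> nul j A"
  using nullity_nonneg[OF matroid_N finite_ground] .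

lemma nullity_edge_le:
  assumes "j \<in> J" "i \<in> I" "A \<subseteq> X i"
  shows "nul j A \<le> int (card A) - int (min (card A) (t i))"
  using nullity_le_excess[of j A] excess_subset_edge[of i A] edge_subset[of i] assms by auto

lemma nullity_edge_small:
  assumes "j \<in> J" "i \<in> I" "A \<subseteq> X i" "card A \<le> t i"
  shows "nul j A = 0"
  using nullity_edge_le[OF assms(1-3)] nullity_N_nonneg[of j A] edge_subset[of i] assms by auto

text \<open>Where \<open>excess\<close> is modular, the supermodular nullities adding up to it are modular too.\<close>

lemma nullity_edge_modular:
  assumes c: "c \<in> J" and i: "i \<in> I" and AB: "A \<subseteq> X i" "B \<subseteq> X i"
    and meet: "card (A \<inter> B) = t i" and "t i \<le> card A" "t i \<le> card B"
  shows "nul c (A \<union> B) + nul c (A \<inter> B) = nul c A + nul c B"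
proof -
  have E: "A \<subseteq> E" "B \<subseteq> E" "A \<union> B \<subseteq> E" "A \<inter> B \<subseteq> E" using AB edge_subset[OF i] by auto
  have "card (A \<union> B) + card (A \<inter> B) = card A + card B"
    using AB finite_edge[OF i] finite_subset by (intro card_Un_Int[symmetric]) auto
  moreover have "A \<union> B \<subseteq> X i" "A \<inter> B \<subseteq> X i" using AB by auto
  ultimately have "excess (A \<union> B) + excess (A \<inter> B) = excess A + excess B"
    using excess_subset_edge[OF i] AB meet assms(6,7) by simp
  then have "(\<Sum>j\<in>J. nul j A + nul j B) = (\<Sum>j\<in>J. nul j (A \<union> B) + nul j (A \<inter> B))"
    using sum_nullity[OF E(1)] sum_nullity[OF E(2)] sum_nullity[OF E(3)] sum_nullity[OF E(4)]
    by (simp add: sum.distrib)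
  then show ?thesis
    using sum_mono_inv[of "\<lambda>j. nul j A + nul j B" J "\<lambda>j. nul j (A \<union> B) + nul j (A \<inter> B)",
        OF _ nullity_supermod[OF matroid_N finite_ground E(1,2)] c] by simp
qed

lemma nullity_edge_exchange:
  assumes c: "c \<in> J" and i: "i \<in> I" and PQ: "P \<subseteq> X i" "Q \<subseteq> X i"
    and card: "card P = t i + 1" "card Q = t i + 1" "card (P \<inter> Q) = t i"
  shows "nul c P = nul c Q"
proof -
  have fin: "finite P" "finite Q" using PQ finite_edge[OF i] finite_subset by auto
  obtain r where r: "r \<in> P" "r \<in> Q" using card threshold_pos[OF i] by (metis Int_iff card.empty disjoint_iff not_one_le_zero)
  define R where "R = (P \<union> Q) - {r}"
  have "card (P \<union> Q) = t i + 2" using card_Un_Int[OF fin] card by simp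
  then have R: "R \<subseteq> X i" "card R = t i + 1" using PQ r unfolding R_def by auto
  have PR: "P \<union> R = P \<union> Q" "P \<inter> R = P - {r}" and QR: "Q \<union> R = P \<union> Q" "Q \<inter> R = Q - {r}"
    using r unfolding R_def by auto
  have "nul c (P - {r}) = 0" "nul c (Q - {r}) = 0"
    using PQ card r by (auto intro!: nullity_edge_small[OF c i])
  moreover have "nul c (P \<union> R) + nul c (P \<inter> R) = nul c P + nul c R"
    using PR card r R fin by (intro nullity_edge_modular[OF c i PQ(1) R(1)]) auto
  moreover have "nul c (Q \<union> R) + nul c (Q \<inter> R) = nul c Q + nul c R"
    using QR card r R fin by (intro nullity_edge_modular[OF c i PQ(2) R(1)]) auto
  ultimately show ?thesis using PR QR by simp
qed

lemma nullity_edge_const: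
  assumes c: "c \<in> J" and i: "i \<in> I"
  shows "P \<subseteq> X i \<Longrightarrow> Q \<subseteq> X i \<Longrightarrow> card P = t i + 1 \<Longrightarrow> card Q = t i + 1 \<Longrightarrow>
    nul c P = nul c Q"
proof (induction "card (P - Q)" arbitrary: P)
  case 0
  have "finite (P - Q)" using 0 finite_edge[OF i] finite_subset by blast
  then have "P \<subseteq> Q" using 0 by simp
  then show ?case using 0 finite_edge[OF i] finite_subset card_subset_eq by metis
next
  case (Suc m)
  have fin: "finite P" "finite Q" using Suc.prems finite_edge[OF i] finite_subset by auto
  have "P - Q \<noteq> {}" using Suc.hyps(2) by (metis card.empty Zero_neq_Suc)
  then obtain p where p: "p \<in> P" "p \<notin> Q" by blast
  have "card (Q - P) = card (P - Q)"
    using card_Diff_subset_Int[of Q P] card_Diff_subset_Int[of P Q] fin Suc.prems(3,4)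
    by (simp add: Int_commute)
  then have "Q - P \<noteq> {}" using Suc.hyps(2) by (metis card.empty Zero_neq_Suc)
  then obtain q where q: "q \<in> Q" "q \<notin> P" by blast
  define P' where "P' = insert q (P - {p})"
  have "P \<inter> P' = P - {p}" using q unfolding P'_def by blast
  then have P': "P' \<subseteq> X i" "card P' = t i + 1" "card (P \<inter> P') = t i"
    using Suc.prems p q fin unfolding P'_def by auto
  have "P' - Q = (P - Q) - {p}" using q unfolding P'_def by blast
  then have "nul c P' = nul c Q" using Suc P' p by auto
  moreover have "nul c P = nul c P'" using nullity_edge_exchange[OF c i] Suc.prems P' by blast
  ultimately show ?case by simp
qed

context
  fixes i assumes i: "i \<in> I" and big: "2 \<le> card (X i)"
begin

text \<open>The \<open>(t\<^sub>i + 1)\<close>-subsets of \<open>X\<^sub>i\<close> have excess 1 and, by the exchange lemma, constant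
  nullity in each class, so a single class carries all of it.\<close>

lemma edge_owner_candidate: "\<exists>ow\<in>J. \<forall>P\<subseteq>X i. card P = t i + 1 \<longrightarrow> nul ow P = 1"
proof -
  obtain P0 where P0: "P0 \<subseteq> X i" "card P0 = t i + 1"
    using obtain_subset_with_card_n[of "t i + 1" "X i"] threshold_less_card[OF i big] by auto
  then have "(\<Sum>j\<in>J. nul j P0) = 1"
    using sum_nullity[of P0] excess_subset_edge[OF i P0(1)] edge_subset[OF i] by simp
  moreover have "\<exists>ow\<in>J. 0 < nul ow P0"
  proof (rule ccontr)
    assume "\<not> ?thesis"
    then have "(\<Sum>j\<in>J. nul j P0) \<le> 0" by (intro sum_nonpos) (simp add: not_less)
    then show False using calculation by simp
  qed
  then obtain ow where ow: "ow \<in> J" "0 < nul ow P0" by blast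
  then have "nul ow P0 = 1" using nullity_edge_le[OF ow(1) i P0(1)] P0(2) by simp
  then show ?thesis using nullity_edge_const[OF ow(1) i _ P0(1) _ P0(2)] ow(1) by metis
qed

context
  fixes ow assumes ow: "ow \<in> J" and nullity_one: "\<forall>P\<subseteq>X i. card P = t i + 1 \<longrightarrow> nul ow P = 1"
begin

lemma edge_subset_nonloops_candidate: "X i \<subseteq> NL ow"
proof
  fix x assume x: "x \<in> X i"
  have "t i \<le> card (X i - {x})" using threshold_less_card[OF i big] x finite_edge[OF i] by simp
  then obtain B where B: "B \<subseteq> X i - {x}" "card B = t i" using obtain_subset_with_card_n by metis
  moreover have "finite B" using B finite_subset[OF _ finite_edge[OF i]] by blast
  moreover have "x \<notin> B" using B by blast
  ultimately have P: "insert x B \<subseteq> X i" "card (insert x B) = t i + 1" using x by auto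
  show "x \<in> NL ow"
  proof (rule ccontr)
    assume "x \<notin> NL ow"
    moreover have "insert x B - {x} = B" "insert x B \<subseteq> E" using B(1) P(1) edge_subset[OF i] by auto
    ultimately have "nul ow B = nul ow (insert x B)"
      using nullity_Diff_loop[OF matroid_N[OF ow] finite_ground, of "insert x B" x] by simp
    moreover have "nul ow B = 0" by (rule nullity_edge_small[OF ow i]) (use B in auto)
    ultimately show False using nullity_one P by simp
  qed
qed

lemma rank_edge_candidate: "N ow (X i) = int (t i)"
proof -
  obtain B where B: "B \<subseteq> X i" "card B = t i"
    using obtain_subset_with_card_n[of "t i" "X i"] threshold_less_card[OF i big] by auto
  have NL: "A \<inter> NL ow = A" if "A \<subseteq> X i" for A using that edge_subset_nonloops_candidate by blast
  have rank_B: "N ow B = int (t i)"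
    using nullity_edge_small[OF ow i B(1)] B NL[OF B(1)] unfolding nonloop_nullity_def by simp
  have "N ow (insert x B) = N ow B" if "x \<in> X i - B" for x
  proof -
    have "insert x B \<subseteq> X i" "card (insert x B) = t i + 1"
      using B that finite_subset[OF _ finite_edge[OF i]] by auto
    then show ?thesis
      using nullity_one[rule_format, of "insert x B"] NL[of "insert x B"] rank_B
      unfolding nonloop_nullity_def by simp
  qed
  then have "N ow (B \<union> (X i - B)) = N ow B"
    using B edge_subset[OF i] finite_edge[OF i]
    by (intro rank_Un_eq_if_insert_eq[OF matroid_N[OF ow]]) auto
  moreover have "B \<union> (X i - B) = X i" using B by blast
  ultimately show ?thesis using rank_B by simp
qed

end

lemma edge_owner_exists:
  "\<exists>ow\<in>J. X i \<subseteq> NL ow \<and> (\<forall>A\<subseteq>X i. nul ow A = excess A) \<and> (\<forall>c\<in>J - {ow}. \<forall>A\<subseteq>X i. nul c A = 0)"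
proof -
  obtain ow where ow: "ow \<in> J" "\<forall>P\<subseteq>X i. card P = t i + 1 \<longrightarrow> nul ow P = 1"
    using edge_owner_candidate by blast
  have XE: "X i \<subseteq> E" by (rule edge_subset[OF i])
  have "nul ow (X i) = excess (X i)"
    using edge_subset_nonloops_candidate[OF ow] rank_edge_candidate[OF ow] excess_subset_edge[OF i]
      threshold_less_card[OF i big] unfolding nonloop_nullity_def by (simp add: Int_absorb2)
  then have rest: "(\<Sum>c\<in>J - {ow}. nul c (X i)) = 0"
    using sum_nullity[OF XE] sum.remove[of J ow "\<lambda>c. nul c (X i)"] ow(1) by simp
  have others: "nul c A = 0" if c: "c \<in> J - {ow}" and A: "A \<subseteq> X i" for c A
  proof -
    have "nul c (X i) = 0"
      using rest sum_nonneg_eq_0_iff[of "J - {ow}" "\<lambda>c. nul c (X i)"] nullity_N_nonneg XE c by auto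
    then show ?thesis
      using nullity_mono[OF matroid_N finite_ground A XE] nullity_N_nonneg[of c A] A XE c by force
  qed
  have "nul ow A = excess A" if A: "A \<subseteq> X i" for A
  proof -
    have "(\<Sum>c\<in>J - {ow}. nul c A) = 0" using others A by simp
    then show ?thesis using sum_nullity[of A] sum.remove[of J ow "\<lambda>c. nul c A"] ow(1) A XE by auto
  qed
  then show ?thesis using ow(1) edge_subset_nonloops_candidate[OF ow] others by blast
qed

end

definition owner :: "nat \<Rightarrow> nat" where
  "owner i = (SOME ow. ow \<in> J \<and> X i \<subseteq> NL ow \<and> (\<forall>A\<subseteq>X i. nul ow A = excess A) \<and>
     (\<forall>c\<in>J - {ow}. \<forall>A\<subseteq>X i. nul c A = 0))"

context
  fixes i assumes i: "i \<in> I" and big: "2 \<le> card (X i)"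
begin

lemma owner_spec:
  "owner i \<in> J \<and> X i \<subseteq> NL (owner i) \<and> (\<forall>A\<subseteq>X i. nul (owner i) A = excess A) \<and>
     (\<forall>c\<in>J - {owner i}. \<forall>A\<subseteq>X i. nul c A = 0)"
  unfolding owner_def by (rule someI_ex) (use edge_owner_exists[OF i big] in blast)

lemma owner_class: "owner i \<in> J"
  using owner_spec by blast

lemma edge_subset_nonloops_owner: "X i \<subseteq> NL (owner i)"
  using owner_spec by blast

lemma nullity_nonowner: "c \<in> J \<Longrightarrow> c \<noteq> owner i \<Longrightarrow> A \<subseteq> X i \<Longrightarrow> nul c A = 0"
  using owner_spec by blast

lemma rank_owner:
  assumes A: "A \<subseteq> X i"
  shows "N (owner i) A = int (min (card A) (t i))"
proof -
  have "A \<inter> NL (owner i) = A" using edge_subset_nonloops_owner A by blast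
  moreover have "nul (owner i) A = excess A" using owner_spec A by blast
  ultimately show ?thesis using excess_subset_edge[OF i A] unfolding nonloop_nullity_def by simp
qed

lemma rank_nonowner: "c \<in> J \<Longrightarrow> c \<noteq> owner i \<Longrightarrow> A \<subseteq> X i \<Longrightarrow> N c A = int (card (A \<inter> NL c))"
  using nullity_nonowner unfolding nonloop_nullity_def by simp

lemma rank_nonowner_free:
  "c \<in> J \<Longrightarrow> c \<noteq> owner i \<Longrightarrow> B \<subseteq> X i \<Longrightarrow> B \<subseteq> NL c \<Longrightarrow> N c B = int (card B)"
  using rank_nonowner by (simp add: Int_absorb2)

end

section \<open>Circuits lie in edges\<close>

lemma nonloop_circuit_in_edge_owner:
  assumes j: "j \<in> J" and C: "nonloop_circuit E (N j) C" and i: "i \<in> I" "C \<subseteq> X i"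
  shows "2 \<le> card (X i) \<and> j = owner i"
proof -
  have "2 \<le> card (X i)"
    using nonloop_circuit_card[OF matroid_N[OF j] finite_ground C] card_mono[OF finite_edge i(2)] i
    by linarith
  moreover have "j = owner i"
    using nullity_nonowner[OF i(1) calculation j _ i(2)] C unfolding nonloop_circuit_def by auto
  ultimately show ?thesis by blast
qed

lemma owner_spanning_saturated:
  assumes A: "A \<subseteq> E" "x \<in> A" and sat: "i \<in> saturated_edges A x"
  shows "owner i \<in> spanning_classes A x"
proof -
  have i: "i \<in> I" "x \<in> X i" "t i < card (A \<inter> X i)" and big: "2 \<le> card (X i)"
    using sat saturated_edge_big unfolding saturated_edges_def by auto
  let ?Q = "A \<inter> X i"
  have "card (?Q - {x}) = card ?Q - 1" using A i by simp
  moreover have "?Q \<subseteq> X i" "?Q - {x} \<subseteq> X i" by auto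
  ultimately have "N (owner i) ?Q = int (t i)" "N (owner i) (?Q - {x}) = int (t i)"
    using rank_owner[OF i(1) big] i(3) by auto
  moreover have "insert x (?Q - {x}) = ?Q" using A i by blast
  ultimately have "N (owner i) (insert x (?Q - {x})) = N (owner i) (?Q - {x})" by simp
  then have "N (owner i) A = N (owner i) (A - {x})"
    using A by (intro rank_Diff_eq_mono[OF matroid_N[OF owner_class[OF i(1) big]], of "?Q - {x}"]) auto
  then show ?thesis
    using owner_class[OF i(1) big] edge_subset_nonloops_owner[OF i(1) big] i
    unfolding spanning_classes_def by blast
qed

lemma other_class_circuit_through:
  assumes A: "A \<subseteq> E" "x \<in> A" and sat: "i \<in> saturated_edges A x" "i' \<in> saturated_edges A x"
    and ne: "i \<noteq> i'"
  shows "\<exists>c C. c \<in> J \<and> c \<noteq> owner i \<and> nonloop_circuit E (N c) C \<and> x \<in> C \<and> C \<subseteq> A"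
proof -
  obtain c where "c \<in> spanning_classes A x" "c \<noteq> owner i"
    using spanning_class_other[OF A sat ne] by blast
  then show ?thesis
    using nonloop_circuit_through[OF matroid_N finite_ground A] unfolding spanning_classes_def by blast
qed

lemma class_of_circuit_in_meeting_edges:
  assumes c: "c \<in> J" and C: "nonloop_circuit E (N c) C" and x: "x \<in> C"
    and i: "i \<in> I" "x \<in> X i" and i': "i' \<in> I" "x \<in> X i'" and sub: "C \<subseteq> X i \<union> X i'"
    and q: "q \<in> I" "C \<subseteq> X q"
  shows "c = owner i \<or> c = owner i'"
proof -
  obtain y where y: "y \<in> C" "y \<noteq> x"
    using exists_other_if_two_le_card[OF nonloop_circuit_card[OF matroid_N[OF c] finite_ground C]]
    by blast
  have xy: "x \<in> X q" "y \<in> X q" using q(2) x y(1) by auto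
  have "y \<in> X i \<or> y \<in> X i'" using y(1) sub by blast
  then have "q = i \<or> q = i'"
    using edges_eq_if_two_common[OF q(1) i(1) xy(1) i(2) xy(2) _ y(2)[symmetric]]
      edges_eq_if_two_common[OF q(1) i'(1) xy(1) i'(2) xy(2) _ y(2)[symmetric]] by blast
  then show ?thesis using nonloop_circuit_in_edge_owner[OF c C q] by blast
qed

text \<open>A circuit lying in no edge is forced into this shape (\<open>circuit_owned_triangle\<close>), which
  (H3) and counting exclude (\<open>no_owned_triangle_in_other_class\<close>).\<close>

definition owned_triangle :: "'a \<Rightarrow> 'a \<Rightarrow> 'a \<Rightarrow> nat \<Rightarrow> nat \<Rightarrow> nat \<Rightarrow> bool" where
  "owned_triangle a b c i1 i2 i3 \<longleftrightarrow> a \<noteq> b \<and> a \<noteq> c \<and> b \<noteq> c \<and> i1 \<in> I \<and> i2 \<in> I \<and> i3 \<in> I \<and>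
     a \<in> X i1 \<and> b \<in> X i1 \<and> c \<notin> X i1 \<and> a \<in> X i2 \<and> c \<in> X i2 \<and> b \<notin> X i2 \<and>
     b \<in> X i3 \<and> c \<in> X i3 \<and> a \<notin> X i3 \<and>
     t i1 = 1 \<and> t i2 = 1 \<and> t i3 = 1 \<and> owner i2 = owner i1 \<and> owner i3 = owner i1"

lemma owned_triangle_swap:
  "owned_triangle a b c i1 i2 i3 \<Longrightarrow> owned_triangle b a c i1 i3 i2"
  unfolding owned_triangle_def by auto

lemma owned_triangle_rotate:
  "owned_triangle a b c i1 i2 i3 \<Longrightarrow> owned_triangle a c b i2 i1 i3"
  unfolding owned_triangle_def by auto

context
  fixes a b c i1 i2 i3 assumes tri: "owned_triangle a b c i1 i2 i3"
begin

lemma owned_triangleD: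
  "a \<noteq> b" "a \<noteq> c" "b \<noteq> c" "i1 \<in> I" "i2 \<in> I" "i3 \<in> I"
  "a \<in> X i1" "b \<in> X i1" "c \<notin> X i1" "a \<in> X i2" "c \<in> X i2" "b \<notin> X i2"
  "b \<in> X i3" "c \<in> X i3" "a \<notin> X i3" "t i1 = 1" "t i2 = 1" "t i3 = 1"
  "owner i2 = owner i1" "owner i3 = owner i1"
  using tri unfolding owned_triangle_def by blast+

lemma owned_triangle_big: "2 \<le> card (X i1)" "2 \<le> card (X i2)" "2 \<le> card (X i3)"
proof -
  have "2 \<le> card (X i)" if "i \<in> I" "x \<in> X i" "y \<in> X i" "x \<noteq> y" for i x y
  proof -
    have "card {x, y} \<le> card (X i)" using that finite_edge by (intro card_mono) auto
    then show ?thesis using that(4) by simp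
  qed
  then show "2 \<le> card (X i1)" "2 \<le> card (X i2)" "2 \<le> card (X i3)"
    using owned_triangleD by blast+
qed

lemma owned_triangle_pair_rank:
  assumes "p \<in> {i1, i2, i3}" "{x, y} \<subseteq> X p"
  shows "N (owner i1) {x, y} \<le> 1"
proof -
  have "p \<in> I" "2 \<le> card (X p)" "t p = 1" "owner p = owner i1"
    using assms(1) owned_triangleD owned_triangle_big by auto
  then show ?thesis using rank_owner[of p "{x, y}"] assms(2) by (simp add: min_def)
qed

lemma owned_triangle_fourth_edge:
  assumes u: "u \<in> X i1" "u \<noteq> a" "u \<noteq> b"
  shows "\<exists>i4\<in>I. u \<in> X i4 \<and> c \<in> X i4"
proof -
  note D = owned_triangleD
  define ow where "ow = owner i1"
  have ow: "ow \<in> J" using owner_class[OF D(4) owned_triangle_big(1)] unfolding ow_def .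
  have NL: "X i1 \<subseteq> NL ow" "X i2 \<subseteq> NL ow"
    using edge_subset_nonloops_owner[OF D(4) owned_triangle_big(1)]
      edge_subset_nonloops_owner[OF D(5) owned_triangle_big(2)] D(19) unfolding ow_def by auto
  have E: "X i1 \<subseteq> E" "X i2 \<subseteq> E" using edge_subset D(4,5) by auto
  have uc: "u \<noteq> c" using u D(9) by blast
  have sub: "{u, a} \<subseteq> E" "{a, c} \<subseteq> E" "{u, c} \<subseteq> E"
    using E u D(7,10,11) by auto
  have "a \<in> E" "a \<in> NL ow" using NL(1) E(1) D(7) by auto
  then have a: "N ow {a} = 1" using rank_N_singleton[OF ow] by simp
  have "{u, a} \<inter> {a, c} = {a}" using uc D(2) by auto
  then have "N ow ({u, a} \<union> {a, c}) + N ow {a} \<le> N ow {u, a} + N ow {a, c}"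
    using rank_submod[OF matroid_N[OF ow] sub(1,2)] by metis
  moreover note a
  moreover have "N ow {u, a} \<le> 1" "N ow {a, c} \<le> 1"
    using owned_triangle_pair_rank[of i1 u a] owned_triangle_pair_rank[of i2 a c] u D(7,10,11)
    unfolding ow_def by auto
  moreover have "N ow {u, c} \<le> N ow ({u, a} \<union> {a, c})" using sub by (intro rank_N_mono[OF ow]) auto
  ultimately have "N ow {u, c} \<le> 1" by linarith
  moreover have "{u, c} \<inter> NL ow = {u, c}" using NL u D(11) by auto
  ultimately have "0 < nul ow {u, c}" using uc unfolding nonloop_nullity_def by simp
  then have "0 < excess {u, c}" using nullity_le_excess[OF ow sub(3)] by simp
  then obtain i4 where i4: "i4 \<in> I" "t i4 < card ({u, c} \<inter> X i4)"
    using excess_pos_imp_saturated by blast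
  moreover have "card ({u, c} \<inter> X i4) \<le> card {u, c}" by (intro card_mono) auto
  ultimately have "card ({u, c} \<inter> X i4) = card {u, c}"
    using threshold_pos[OF i4(1)] uc by simp
  then have "{u, c} \<inter> X i4 = {u, c}" by (intro card_subset_eq) auto
  then show ?thesis using i4 by blast
qed

lemma owned_triangle_saturated:
  assumes "p \<in> {i1, i2, i3}" "{x, y} \<subseteq> A \<inter> X p" "x \<noteq> y"
  shows "p \<in> saturated_edges A x"
proof -
  have p: "p \<in> I" "t p = 1" using assms(1) owned_triangleD by auto
  have "card {x, y} \<le> card (A \<inter> X p)" using assms(2) finite_edge[OF p(1)] by (intro card_mono) auto
  then show ?thesis using assms p unfolding saturated_edges_def by auto
qed

lemma owned_triangle_spanning_apex:
  assumes u: "u \<in> X i1" and c': "c' \<in> J" "c \<in> NL c'"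
    and S: "S \<subseteq> {a, b, u}" "N c' (insert c S) = N c' S" and E: "{a, b, c, u} \<subseteq> E"
  shows "c' \<in> spanning_classes {a, b, c, u} c"
proof -
  have "S \<subseteq> {a, b, c, u} - {c}" using S(1) u owned_triangleD(2,3,9) by auto
  then show ?thesis
    using rank_Diff_eq_mono[OF matroid_N[OF c'(1)] _ E _ S(2)] c'
    unfolding spanning_classes_def by simp
qed

lemma owned_triangle_pair_rank_other:
  assumes "p \<in> {i1, i2, i3}" "{x, y} \<subseteq> X p" "x \<noteq> y" and c': "c' \<in> J" "c' \<noteq> owner i1"
    and "{x, y} \<subseteq> NL c'"
  shows "N c' {x, y} = 2"
proof -
  have "p \<in> I" "2 \<le> card (X p)" "owner p = owner i1"
    using assms(1) owned_triangleD owned_triangle_big by auto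
  then show ?thesis using rank_nonowner_free[of p c' "{x, y}"] assms by simp
qed

text \<open>In a class other than the owner, \<open>{a, x}\<close> is free for \<open>x \<in> {u, c}\<close>; so if \<open>a\<close> is spanned
  by \<open>{u, c}\<close>, both \<open>u\<close> and \<open>c\<close> must be nonloops.\<close>

lemma owned_triangle_spanning_class_nonloops:
  assumes u: "u \<in> X i1" "u \<noteq> a" "u \<noteq> b" and c': "c' \<in> J" "c' \<noteq> owner i1" "a \<in> NL c'"
    and spans: "N c' {a, u, c} = N c' {u, c}"
  shows "u \<in> NL c' \<and> c \<in> NL c'"
proof -
  note D = owned_triangleD
  have AE: "{a, u, c} \<subseteq> E" using u D(7,11) edge_subset D(4,5) by auto
  have free: "N c' (B \<inter> NL c') = int (card (B \<inter> NL c'))" if "p \<in> {i1, i2}" "B \<subseteq> X p" for p B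
    using rank_nonowner_free[of p c' "B \<inter> NL c'"] that c' D owned_triangle_big by auto
  have other_nonloop: "y \<in> NL c'"
    if "p \<in> {i1, i2}" "{a, x} \<subseteq> X p" "{x, y} = {u, c}" "a \<noteq> x" for p x y
  proof (rule ccontr)
    assume y: "y \<notin> NL c'"
    have xE: "{x} \<subseteq> E" "{a, x} \<subseteq> E" "{u, c} \<subseteq> E" using that AE by auto
    have "{u, c} \<inter> NL c' = {x} \<inter> NL c'" using that(3) y by auto
    then have "N c' {u, c} \<le> int (card ({x} \<inter> NL c'))"
      using rank_restrict_nonloops[OF matroid_N[OF c'(1)] finite_ground xE(3)]
        rank_le_card[OF matroid_N[OF c'(1)], of "{x} \<inter> NL c'"] xE by auto
    moreover have "card ({a, x} \<inter> NL c') = card ({x} \<inter> NL c') + 1"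
      using c'(3) that(4) by (cases "x \<in> NL c'") auto
    moreover have "N c' ({a, x} \<inter> NL c') \<le> N c' {a, u, c}"
      using AE that(3) by (intro rank_N_mono[OF c'(1)]) auto
    ultimately show False using free[OF that(1,2)] spans by simp
  qed
  have "{c, u} = {u, c}" by auto
  then show ?thesis
    using other_nonloop[of i2 c u] other_nonloop[of i1 u c] u D(2,7,10,11) by auto
qed

lemma owned_triangle_other_class:
  assumes u: "u \<in> X i1" "u \<noteq> a" "u \<noteq> b"
    and E: "{a, b, c, u} \<subseteq> E"
  shows "\<exists>j'\<in>J. j' \<noteq> owner i1 \<and> {a, u, c} \<subseteq> NL j' \<and>
    N j' {u, c} = 2 \<and> N j' {a, u, c} = 2 \<and> j' \<in> spanning_classes {a, b, c, u} c"
proof -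
  note D = owned_triangleD
  let ?A = "{a, u, c}"
  have uc: "u \<noteq> c" using u D(9) by blast
  have AE: "?A \<subseteq> E" using E by auto
  have "i1 \<in> saturated_edges ?A a" "i2 \<in> saturated_edges ?A a" "i1 \<noteq> i2"
    using owned_triangle_saturated[of i1 a u ?A] owned_triangle_saturated[of i2 a c ?A] u D
    by auto
  then obtain j' where j': "j' \<in> spanning_classes ?A a" "j' \<noteq> owner i1"
    using spanning_class_other[OF AE] by blast
  have j: "j' \<in> J" "a \<in> NL j'" and spans: "N j' ?A = N j' {u, c}"
    using j' u D(1,2) unfolding spanning_classes_def by (auto simp: insert_Diff_if)
  have NL: "u \<in> NL j'" "c \<in> NL j'"
    using owned_triangle_spanning_class_nonloops[OF u j(1) j'(2) j(2) spans] by auto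
  have au: "N j' {a, u} = 2"
    using owned_triangle_pair_rank_other[of i1 a u j'] j j' NL u D by auto
  have "N j' {a, u} \<le> N j' ?A" using AE by (intro rank_N_mono[OF j(1)]) auto
  moreover have "N j' {u, c} \<le> 2"
    using rank_le_card[OF matroid_N[OF j(1)], of "{u, c}"] AE uc by simp
  ultimately have uc2: "N j' {u, c} = 2" using au spans by simp
  then have "N j' (insert c {a, u}) = N j' {a, u}" using au spans by (simp add: insert_commute)
  then have "j' \<in> spanning_classes {a, b, c, u} c"
    by (rule owned_triangle_spanning_apex[OF u(1) j(1) NL(2) _ _ E, rotated]) auto
  then show ?thesis using j j' NL spans uc2 by auto
qed

lemma owned_triangle_saturated_at_apex:
  assumes u: "u \<in> X i1" "u \<noteq> a" "u \<noteq> b" and i4: "i4 \<in> I" "u \<in> X i4" "c \<in> X i4"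
  shows "saturated_edges {a, b, c, u} c \<subseteq> {i2, i3, i4}"
proof
  note D = owned_triangleD
  fix p assume p: "p \<in> saturated_edges {a, b, c, u} c"
  then have pI: "p \<in> I" "c \<in> X p" unfolding saturated_edges_def by auto
  have "\<not> {a, b, c, u} \<inter> X p \<subseteq> {c}"
  proof
    assume "{a, b, c, u} \<inter> X p \<subseteq> {c}"
    then have "card ({a, b, c, u} \<inter> X p) \<le> 1" using card_mono[of "{c}"] by fastforce
    then show False using saturated_edge_card[OF p] by simp
  qed
  then obtain y where y: "y \<in> X p" "y \<noteq> c" "y = a \<or> y = b \<or> y = u" by blast
  then consider "y = a" | "y = b" | "y = u" by blast
  then show "p \<in> {i2, i3, i4}"
  proof cases
    case 1
    then show ?thesis using edges_eq_if_two_common[OF pI(1) D(5) pI(2) D(11) y(1) _ y(2)[symmetric]] D(10) by simp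
  next
    case 2
    then show ?thesis using edges_eq_if_two_common[OF pI(1) D(6) pI(2) D(14) y(1) _ y(2)[symmetric]] D(13) by simp
  next
    case 3
    then show ?thesis using edges_eq_if_two_common[OF pI(1) i4(1) pI(2) i4(3) y(1) _ y(2)[symmetric]] i4(2) by simp
  qed
qed

text \<open>The triple \<open>{a, b, u}\<close> of \<open>X i1\<close> is independent in every class other than the owner
  in which it consists of nonloops, so it cannot lie in the union of two rank-2 sets sharing
  rank 2.\<close>

lemma owned_triangle_no_rank2_cover:
  assumes u: "u \<in> X i1" "u \<noteq> a" "u \<noteq> b" and c': "c' \<in> J" "c' \<noteq> owner i1"
    and NL: "{a, b, u} \<subseteq> NL c'" and S: "S1 \<subseteq> E" "S2 \<subseteq> E" "N c' S1 \<le> 2" "N c' S2 \<le> 2"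
    and Z: "Z \<subseteq> S1 \<inter> S2" "2 \<le> N c' Z" and cover: "{a, b, u} \<subseteq> S1 \<union> S2"
  shows False
proof -
  have "N c' {a, b, u} \<le> 2"
    using rank_le_if_covered_by_sharing[OF matroid_N[OF c'(1)] S Z cover] .
  moreover have "N c' {a, b, u} = 3"
    using rank_nonowner_free[OF owned_triangleD(4) owned_triangle_big(1) c', of "{a, b, u}"]
      NL u owned_triangleD by auto
  ultimately show False by simp
qed

lemma owned_triangle_apex_spanned_by_owner:
  assumes E: "{a, b, c, u} \<subseteq> E"
  shows "owner i1 \<in> spanning_classes {a, b, c, u} c"
proof -
  have "i2 \<in> saturated_edges {a, b, c, u} c"
    using owned_triangle_saturated[of i2 c a "{a, b, c, u}"] owned_triangleD by auto
  then show ?thesis using owner_spanning_saturated[OF E, of c i2] owned_triangleD(19) by auto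
qed

lemma owned_triangle_apex_spanned_by_class:
  assumes u: "u \<in> X i1" and j: "j \<in> J" "j \<noteq> owner i1" "{a, b, c} \<subseteq> NL j" "N j {a, b, c} \<le> 2"
    and E: "{a, b, c, u} \<subseteq> E"
  shows "j \<in> spanning_classes {a, b, c, u} c"
proof -
  have "N j {a, b} = 2"
    using owned_triangle_pair_rank_other[of i1 a b j] j owned_triangleD by auto
  moreover have "N j {a, b} \<le> N j {a, b, c}" using E by (intro rank_N_mono[OF j(1)]) auto
  moreover have "insert c {a, b} = {a, b, c}" by auto
  ultimately have "N j (insert c {a, b}) = N j {a, b}" using j(4) by simp
  then show ?thesis
    by (rule owned_triangle_spanning_apex[OF u j(1) _ _ _ E, rotated 2]) (use j(3) in auto)
qed

lemma owned_triangle_classes_distinct: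
  assumes u: "u \<in> X i1" "u \<noteq> a" "u \<noteq> b"
    and j: "j \<in> J" "j \<noteq> owner i1" "{a, b, c} \<subseteq> NL j" "N j {a, b, c} \<le> 2"
    and j5: "j5 \<in> J" "j5 \<noteq> owner i1" "{a, u, c} \<subseteq> NL j5" "N j5 {u, c} = 2" "N j5 {a, u, c} = 2"
    and j6: "j6 \<in> J" "j6 \<noteq> owner i1" "{b, u, c} \<subseteq> NL j6" "N j6 {u, c} = 2" "N j6 {b, u, c} = 2"
  shows "j \<noteq> j5 \<and> j \<noteq> j6 \<and> j5 \<noteq> j6"
proof -
  note D = owned_triangleD
  have E: "{a, b, c} \<subseteq> E" "{a, u, c} \<subseteq> E" "{b, u, c} \<subseteq> E"
    using u D(7,8,11) edge_subset D(4,5) by auto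
  have rank_j: "N j {a, c} = 2" "N j {b, c} = 2"
    using owned_triangle_pair_rank_other[of i2 a c j] owned_triangle_pair_rank_other[of i3 b c j] j D
    by auto
  note no_cover = owned_triangle_no_rank2_cover[OF u]
  have "j \<noteq> j5"
  proof
    assume "j = j5"
    show False
      by (rule no_cover[OF j(1,2) _ E(1,2) j(4), of "{a, c}"]) (use j(3) j5 rank_j \<open>j = j5\<close> in auto)
  qed
  moreover have "j \<noteq> j6"
  proof
    assume "j = j6"
    show False
      by (rule no_cover[OF j(1,2) _ E(1,3) j(4), of "{b, c}"]) (use j(3) j6 rank_j \<open>j = j6\<close> in auto)
  qed
  moreover have "j5 \<noteq> j6"
  proof
    assume "j5 = j6"
    show False
      by (rule no_cover[OF j5(1,2) _ E(2,3) j5(5)[THEN eq_refl], of "{u, c}"])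
        (use j5 j6 \<open>j5 = j6\<close> in auto)
  qed
  ultimately show ?thesis by blast
qed

end

lemma owned_triangle_four_spanning_classes:
  assumes tri: "owned_triangle a b c i1 i2 i3" and u: "u \<in> X i1" "u \<noteq> a" "u \<noteq> b"
    and j: "j \<in> J" "j \<noteq> owner i1" "{a, b, c} \<subseteq> NL j" "N j {a, b, c} \<le> 2"
  shows "4 \<le> card (spanning_classes {a, b, c, u} c)"
proof -
  note D = owned_triangleD[OF tri]
  define ow where "ow = owner i1"
  let ?A = "{a, b, c, u}"
  have AE: "?A \<subseteq> E" "{b, a, c, u} \<subseteq> E" using u D(7,8,11) edge_subset D(4,5) by auto
  obtain j5 where j5: "j5 \<in> J" "j5 \<noteq> ow" "{a, u, c} \<subseteq> NL j5"
      "N j5 {u, c} = 2" "N j5 {a, u, c} = 2" "j5 \<in> spanning_classes ?A c"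
    using owned_triangle_other_class[OF tri u AE(1)] unfolding ow_def by blast
  obtain j6 where j6: "j6 \<in> J" "j6 \<noteq> ow" "{b, u, c} \<subseteq> NL j6"
      "N j6 {u, c} = 2" "N j6 {b, u, c} = 2" "j6 \<in> spanning_classes {b, a, c, u} c"
    using owned_triangle_other_class[OF owned_triangle_swap[OF tri] u(1,3,2) AE(2)]
    unfolding ow_def by blast
  have "{b, a, c, u} = ?A" by auto
  then have "{ow, j, j5, j6} \<subseteq> spanning_classes ?A c"
    using owned_triangle_apex_spanned_by_owner[OF tri AE(1)]
      owned_triangle_apex_spanned_by_class[OF tri u(1) j AE(1)] j5(6) j6(6) unfolding ow_def by auto
  moreover have "card {ow, j, j5, j6} = 4"
    using owned_triangle_classes_distinct[OF tri u j j5(1) _ j5(3-5) j6(1) _ j6(3-5)] j(2) j5(2) j6(2)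
    unfolding ow_def by auto
  ultimately show ?thesis using card_mono[OF finite_spanning_classes] by metis
qed

lemma owned_triangle_edge_pair:
  assumes tri: "owned_triangle a b c i1 i2 i3"
    and j: "j \<in> J" "j \<noteq> owner i1" "{a, b, c} \<subseteq> NL j" "N j {a, b, c} \<le> 2"
  shows "X i1 \<subseteq> {a, b}"
proof (rule ccontr)
  assume "\<not> ?thesis"
  then obtain u where u: "u \<in> X i1" "u \<noteq> a" "u \<noteq> b" by blast
  then obtain i4 where i4: "i4 \<in> I" "u \<in> X i4" "c \<in> X i4"
    using owned_triangle_fourth_edge[OF tri] by blast
  have "{a, b, c, u} \<subseteq> E" using u owned_triangleD[OF tri] edge_subset by auto
  then have "4 \<le> card (saturated_edges {a, b, c, u} c)"
    using owned_triangle_four_spanning_classes[OF tri u j] card_spanning_classes by simp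
  moreover have "card (saturated_edges {a, b, c, u} c) \<le> card {i2, i3, i4}"
    using owned_triangle_saturated_at_apex[OF tri u i4] by (intro card_mono) auto
  moreover have "card {i2, i3, i4} \<le> 3" by (simp add: card_insert_le_m1)
  ultimately show False by simp
qed

lemma no_owned_triangle_in_other_class:
  assumes tri: "owned_triangle a b c i1 i2 i3"
    and j: "j \<in> J" "j \<noteq> owner i1" "{a, b, c} \<subseteq> NL j" "N j {a, b, c} \<le> 2"
  shows False
proof -
  note D = owned_triangleD[OF tri]
  have perm: "{a, c, b} = {a, b, c}" "{b, c, a} = {a, b, c}" by auto
  have "X i1 \<subseteq> {a, b}" using owned_triangle_edge_pair[OF tri j] .
  moreover have "X i2 \<subseteq> {a, c}"
    using owned_triangle_edge_pair[OF owned_triangle_rotate[OF tri]] j D(19) perm by simp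
  moreover have "X i3 \<subseteq> {b, c}"
    using owned_triangle_edge_pair[OF owned_triangle_rotate[OF owned_triangle_swap[OF tri]]]
      j D(20) perm by simp
  ultimately have "X i1 = {a, b}" "X i2 = {a, c}" "X i3 = {b, c}" using D by auto
  then have "{a, b} \<in> hyperedges n X" "{a, c} \<in> hyperedges n X" "{b, c} \<in> hyperedges n X"
    using D(4-6) unfolding hyperedges_def by (metis image_eqI)+
  moreover have "a \<in> E" "b \<in> E" "c \<in> E" using D edge_subset by blast+
  ultimately show False using no_triangle D(1-3) by blast
qed

context
  fixes j C
  assumes j: "j \<in> J" and circuit: "nonloop_circuit E (N j) C" and not_in_edge: "\<forall>i\<in>I. \<not> C \<subseteq> X i"
begin

lemma circuit_subset_ground: "C \<subseteq> E"
  using circuit unfolding nonloop_circuit_def by blast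

lemma finite_circuit: "finite C"
  using circuit_subset_ground finite_subset_ground by blast

lemma saturated_owner_ne_circuit_class:
  assumes sat: "i \<in> saturated_edges C x"
  shows "owner i \<noteq> j"
proof
  assume owner: "owner i = j"
  have i: "i \<in> I" "t i < card (C \<inter> X i)" using sat unfolding saturated_edges_def by auto
  have "nul j (C \<inter> X i) = excess (C \<inter> X i)"
    using owner_spec[OF i(1) saturated_edge_big[OF sat]] owner by auto
  then have "0 < nul j (C \<inter> X i)" using excess_subset_edge[OF i(1), of "C \<inter> X i"] i(2) by simp
  moreover have "C \<inter> X i \<subset> C" using not_in_edge i(1) by blast
  ultimately show False using circuit unfolding nonloop_circuit_def by auto
qed

text \<open>The circuit class and the owners of the saturated edges all span \<open>x\<close>, and the former
  is none of the latter, so counting forces two saturated edges to share their owner.\<close>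

lemma saturated_owners_collide:
  assumes x: "x \<in> C"
  shows "\<exists>i i'. i \<in> saturated_edges C x \<and> i' \<in> saturated_edges C x \<and> i \<noteq> i' \<and> owner i = owner i'"
proof (rule ccontr)
  let ?S = "saturated_edges C x"
  assume "\<not> ?thesis"
  then have inj: "inj_on owner ?S" unfolding inj_on_def by blast
  have "j \<in> spanning_classes C x"
    using j x nonloop_circuit_subset_nonloops[OF matroid_N[OF j] finite_ground circuit]
      nonloop_circuit_rank_Diff[OF matroid_N[OF j] finite_ground circuit x]
    unfolding spanning_classes_def by blast
  moreover have "owner ` ?S \<subseteq> spanning_classes C x"
    using owner_spanning_saturated[OF circuit_subset_ground x] by blast
  ultimately have "card (insert j (owner ` ?S)) \<le> card (spanning_classes C x)"
    by (intro card_mono finite_spanning_classes) auto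
  moreover have "j \<notin> owner ` ?S" using saturated_owner_ne_circuit_class by fastforce
  ultimately have "card ?S + 1 \<le> card (spanning_classes C x)"
    using card_image[OF inj] finite_saturated_edges by simp
  then show False using card_spanning_classes[OF circuit_subset_ground x] by simp
qed

context
  assumes smaller_in_edge:
    "\<And>j' C'. j' \<in> J \<Longrightarrow> nonloop_circuit E (N j') C' \<Longrightarrow> card C' < card C \<Longrightarrow> \<exists>q\<in>I. C' \<subseteq> X q"
begin

text \<open>Otherwise a circuit of another class through \<open>x\<close> inside the two edges would be smaller
  than \<open>C\<close>, hence inside one edge, hence owned by the common owner.\<close>

lemma covered_by_colliding_edges:
  assumes x: "x \<in> C" and sat: "i \<in> saturated_edges C x" "i' \<in> saturated_edges C x"
    and ne: "i \<noteq> i'" and owner: "owner i = owner i'"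
  shows "C \<subseteq> X i \<union> X i'"
proof -
  let ?A = "(C \<inter> X i) \<union> (C \<inter> X i')"
  have A: "?A \<subseteq> E" "x \<in> ?A" and i: "i \<in> I" "x \<in> X i" and i': "i' \<in> I" "x \<in> X i'"
    using x sat circuit_subset_ground unfolding saturated_edges_def by auto
  have "?A \<inter> X i = C \<inter> X i" "?A \<inter> X i' = C \<inter> X i'" by blast+
  then have "i \<in> saturated_edges ?A x" "i' \<in> saturated_edges ?A x"
    using sat unfolding saturated_edges_def by auto
  then obtain c C' where c: "c \<in> J" "c \<noteq> owner i"
      and C': "nonloop_circuit E (N c) C'" "x \<in> C'" "C' \<subseteq> ?A"
    using other_class_circuit_through[OF A _ _ ne] by blast
  have "card C' = card C"
  proof (rule ccontr)
    assume "card C' \<noteq> card C"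
    moreover have "card C' \<le> card C" using C'(3) finite_circuit by (intro card_mono) auto
    ultimately obtain q where q: "q \<in> I" "C' \<subseteq> X q" using smaller_in_edge[OF c(1) C'(1)] by force
    have "C' \<subseteq> X i \<union> X i'" using C'(3) by blast
    then show False
      using class_of_circuit_in_meeting_edges[OF c(1) C'(1,2) i i' _ q] c(2) owner by simp
  qed
  moreover have "C' \<subseteq> C" using C'(3) by blast
  ultimately have "C' = C" using finite_circuit card_subset_eq by blast
  then show ?thesis using C'(3) by blast
qed

lemma colliding_edges_third_edge:
  assumes x: "x \<in> C" and sat: "i \<in> saturated_edges C x" "i' \<in> saturated_edges C x"
    and ne: "i \<noteq> i'" and owner: "owner i = owner i'"
  shows "\<exists>x'' p. x'' \<in> C \<inter> X i \<and> x'' \<noteq> x \<and> p \<in> saturated_edges C x'' \<and> p \<noteq> i \<and> p \<noteq> i' \<and>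
    owner p = owner i \<and> C \<subseteq> X p \<union> X i"
proof -
  have i: "i \<in> I" "x \<in> X i" and i': "i' \<in> I" "x \<in> X i'"
    using sat unfolding saturated_edges_def by auto
  have meet: "X i \<inter> X i' = {x}" using edges_inter_eq_singleton[OF i(1) i'(1) ne i(2) i'(2)] .
  obtain x'' where x'': "x'' \<in> C \<inter> X i" "x'' \<noteq> x"
    using exists_other_if_two_le_card[OF saturated_edge_card[OF sat(1)]] by blast
  obtain p1 p2 where p: "p1 \<in> saturated_edges C x''" "p2 \<in> saturated_edges C x''" "p1 \<noteq> p2"
      "owner p1 = owner p2"
    using saturated_owners_collide[of x''] x'' by blast
  have cover: "C \<subseteq> X p1 \<union> X p2" using covered_by_colliding_edges[OF _ p] x'' by blast
  have p_I: "p1 \<in> I" "x'' \<in> X p1" "p2 \<in> I" "x'' \<in> X p2"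
    using p unfolding saturated_edges_def by auto
  have "p1 = i \<or> p2 = i"
  proof (rule ccontr)
    assume "\<not> ?thesis"
    then have "X p1 \<inter> X i = {x''}" "X p2 \<inter> X i = {x''}"
      using edges_inter_eq_singleton[OF p_I(1) i(1) _ p_I(2)]
        edges_inter_eq_singleton[OF p_I(3) i(1) _ p_I(4)] x'' by auto
    moreover have "x \<in> X p1 \<or> x \<in> X p2" using cover x by blast
    ultimately show False using i(2) x''(2) by auto
  qed
  then obtain p where p': "p \<in> saturated_edges C x''" "p \<noteq> i" "owner p = owner i" "C \<subseteq> X p \<union> X i"
  proof
    assume "p1 = i"
    then show ?thesis using that[of p2] p cover by auto
  next
    assume "p2 = i"
    then show ?thesis using that[of p1] p cover by auto
  qed
  moreover have "p \<noteq> i'"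
    using p' meet x'' unfolding saturated_edges_def by blast
  ultimately show ?thesis using x'' by blast
qed

lemma circuit_owned_triangle:
  "\<exists>a b c i1 i2 i3. C = {a, b, c} \<and> owned_triangle a b c i1 i2 i3 \<and> j \<noteq> owner i1"
proof -
  obtain x where x: "x \<in> C"
    using exists_other_if_two_le_card[OF nonloop_circuit_card[OF matroid_N[OF j] finite_ground circuit]]
    by blast
  obtain i i' where sat: "i \<in> saturated_edges C x" "i' \<in> saturated_edges C x" "i \<noteq> i'"
      and owner: "owner i = owner i'"
    using saturated_owners_collide[OF x] by blast
  have i: "i \<in> I" "x \<in> X i" and i': "i' \<in> I" "x \<in> X i'"
    using sat unfolding saturated_edges_def by auto
  have meet: "X i \<inter> X i' = {x}" using edges_inter_eq_singleton[OF i(1) i'(1) sat(3) i(2) i'(2)] .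
  obtain x'' p where x'': "x'' \<in> C \<inter> X i" "x'' \<noteq> x" and p: "p \<in> saturated_edges C x''" "p \<noteq> i"
      "p \<noteq> i'" "owner p = owner i" "C \<subseteq> X p \<union> X i"
    using colliding_edges_third_edge[OF x sat owner] by blast
  obtain x3 p' where "p' \<in> saturated_edges C x3" "p' \<noteq> i" "C \<subseteq> X p' \<union> X i'"
    using colliding_edges_third_edge[OF x sat(2,1) sat(3)[symmetric] owner[symmetric]] by blast
  then have p': "p' \<in> I" "p' \<noteq> i" "C \<subseteq> X p' \<union> X i'" unfolding saturated_edges_def by auto
  have pI: "p \<in> I" "x'' \<in> X p" using p unfolding saturated_edges_def by auto
  obtain y where y: "C \<inter> X i' = {x, y}" "y \<noteq> x" "y \<in> X p"
    using inter_eq_pair_if_covered[OF i(1) i'(1) pI(1) p(3) meet p(5) x saturated_edge_card[OF sat(2)]]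
    by blast
  have "X i' \<inter> X i = {x}" using meet by blast
  then obtain y' where y': "C \<inter> X i = {x, y'}"
    using inter_eq_pair_if_covered[OF i'(1) i(1) p'(1,2) _ p'(3) x saturated_edge_card[OF sat(1)]]
    by blast
  then have "y' = x''" using x'' by auto
  have "C = (C \<inter> X i) \<union> (C \<inter> X i')" using covered_by_colliding_edges[OF x sat owner] by blast
  also have "\<dots> = {x, x''} \<union> {x, y}" using y(1) y' \<open>y' = x''\<close> by simp
  finally have C: "C = {x, x'', y}" by auto
  have "x \<notin> X p" using edges_eq_if_two_common[OF pI(1) i(1) _ i(2) pI(2) _ x''(2)[symmetric]] p(2)
    x'' by blast
  then have "C \<inter> X p \<subseteq> {x'', y}" unfolding C by blast
  moreover have two: "card {v, w} \<le> 2" for v w :: 'a by (simp add: card_insert_if)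
  ultimately have "card (C \<inter> X p) \<le> 2" using card_mono[of "{x'', y}" "C \<inter> X p"] le_trans by blast
  then have "t p = 1" using saturated_edge_threshold_1[OF p(1)] by blast
  moreover have "t i = 1" "t i' = 1"
    using saturated_edge_threshold_1[OF sat(1)] saturated_edge_threshold_1[OF sat(2)] y(1) y' two
    by auto
  moreover have "y \<notin> X i" "x'' \<notin> X i'" using meet x'' y by blast+
  moreover have "j \<noteq> owner i" using saturated_owner_ne_circuit_class[OF sat(1)] by simp
  ultimately have "owned_triangle x x'' y i i' p \<and> j \<noteq> owner i"
    unfolding owned_triangle_def using x'' y i i' pI \<open>x \<notin> X p\<close> p(4) owner by auto
  then show ?thesis using C by blast
qed

end

end

lemma nonloop_circuit_in_edge:
  "j \<in> J \<Longrightarrow> nonloop_circuit E (N j) C \<Longrightarrow> \<exists>i\<in>I. C \<subseteq> X i"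
proof (induction "card C" arbitrary: j C rule: less_induct)
  case less
  show ?case
  proof (rule ccontr)
    assume "\<not> ?case"
    then obtain a b c i1 i2 i3 where C: "C = {a, b, c}" and tri: "owned_triangle a b c i1 i2 i3"
        and j: "j \<noteq> owner i1"
      using circuit_owned_triangle[OF less.prems] less.hyps by blast
    have "{a, b, c} \<subseteq> NL j"
      using nonloop_circuit_subset_nonloops[OF matroid_N[OF less.prems(1)] finite_ground less.prems(2)] C
      by simp
    moreover have "N j {a, b, c} \<le> 2"
      using nonloop_circuit_rank[OF matroid_N[OF less.prems(1)] finite_ground less.prems(2)] C
        owned_triangleD(1-3)[OF tri] by simp
    ultimately show False using no_owned_triangle_in_other_class[OF tri less.prems(1) j] by blast
  qed
qed

section \<open>The coloring of a decomposition\<close>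

lemma owners_distinct:
  assumes i: "i \<in> I" "2 \<le> card (X i)" and i': "i' \<in> I" "2 \<le> card (X i')" and ne: "i \<noteq> i'"
    and x: "x \<in> X i" "x \<in> X i'"
  shows "owner i \<noteq> owner i'"
proof
  assume owner: "owner i = owner i'"
  let ?A = "X i \<union> X i'"
  have A: "?A \<subseteq> E" "x \<in> ?A" using edge_subset i i' x by auto
  have "?A \<inter> X i = X i" "?A \<inter> X i' = X i'" by auto
  then have "i \<in> saturated_edges ?A x" "i' \<in> saturated_edges ?A x"
    using threshold_less_card i i' x unfolding saturated_edges_def by auto
  then obtain c C where c: "c \<in> J" "c \<noteq> owner i"
      and C: "nonloop_circuit E (N c) C" "x \<in> C" "C \<subseteq> ?A"
    using other_class_circuit_through[OF A _ _ ne] by blast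
  obtain q where q: "q \<in> I" "C \<subseteq> X q" using nonloop_circuit_in_edge[OF c(1) C(1)] by blast
  then show False
    using class_of_circuit_in_meeting_edges[OF c(1) C(1,2) i(1) x(1) i'(1) x(2) C(3) q] c(2) owner
    by simp
qed

text \<open>Of the \<open>w(x)\<close> classes in which \<open>x\<close> is a nonloop, at most \<open>w(x) - 1\<close> own an edge
  through \<open>x\<close>, which leaves one for a singleton edge \<open>{x}\<close>.\<close>

lemma singleton_edge_free_class:
  assumes i: "i \<in> I" "X i = {x}"
  shows "\<exists>c\<in>J. x \<in> NL c \<and> (\<forall>l\<in>I. 2 \<le> card (X l) \<and> x \<in> X l \<longrightarrow> owner l \<noteq> c)"
proof -
  let ?T = "{l\<in>I. x \<in> X l}" and ?B = "{l\<in>I. 2 \<le> card (X l) \<and> x \<in> X l}"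
  have xE: "x \<in> E" using edge_subset i by blast
  have "?B = ?T - {i}"
  proof
    show "?T - {i} \<subseteq> ?B"
    proof
      fix l assume l: "l \<in> ?T - {i}"
      have "l \<in> I" "l \<noteq> i" using l by auto
      then have "X l \<noteq> {x}" using inj_on_contraD[OF inj_edges] i by metis
      then have "\<not> X l \<subseteq> {x}" using edge_nonempty l by blast
      then obtain y where "y \<in> X l" "y \<noteq> x" by blast
      then have "card {x, y} \<le> card (X l)" using l finite_edge by (intro card_mono) auto
      then show "l \<in> ?B" using l \<open>y \<noteq> x\<close> by auto
    qed
  qed (use i in auto)
  moreover have "i \<in> ?T" using i by auto
  ultimately have "card ?B < card ?T" using card_Diff1_less[of ?T i] by simp
  moreover have "inj_on owner ?B"
  proof (rule inj_onI)
    fix l l' assume "l \<in> ?B" "l' \<in> ?B" "owner l = owner l'"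
    then show "l = l'" using owners_distinct[of l l' x] by auto
  qed
  then have "card (owner ` ?B) = card ?B" by (rule card_image)
  ultimately have "card (owner ` ?B) < card {c\<in>J. x \<in> NL c}"
    using card_nonloop_classes[OF xE] unfolding hweight_def by simp
  moreover have "finite (owner ` ?B)" by simp
  ultimately have "\<not> {c\<in>J. x \<in> NL c} \<subseteq> owner ` ?B"
    using card_mono[of "owner ` ?B" "{c\<in>J. x \<in> NL c}"] by linarith
  then show ?thesis by blast
qed

definition color :: "nat \<Rightarrow> nat" where
  "color i = (if 2 \<le> card (X i) then owner i
     else SOME c. c \<in> J \<and> the_elem (X i) \<in> NL c \<and>
       (\<forall>l\<in>I. 2 \<le> card (X l) \<and> the_elem (X i) \<in> X l \<longrightarrow> owner l \<noteq> c))"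

lemma color_singleton:
  assumes i: "i \<in> I" and small: "\<not> 2 \<le> card (X i)"
  shows "color i \<in> J \<and> the_elem (X i) \<in> NL (color i) \<and>
    (\<forall>l\<in>I. 2 \<le> card (X l) \<and> the_elem (X i) \<in> X l \<longrightarrow> owner l \<noteq> color i)"
  using someI_ex[OF singleton_edge_free_class[OF i singleton_edge[OF i small], unfolded Bex_def]] small
  unfolding color_def by simp

lemma color_class: "i \<in> I \<Longrightarrow> color i \<in> J"
  using owner_class color_singleton unfolding color_def by (cases "2 \<le> card (X i)") auto

lemma edge_subset_nonloops_color:
  assumes i: "i \<in> I"
  shows "X i \<subseteq> NL (color i)"
proof (cases "2 \<le> card (X i)")
  case True
  then show ?thesis using edge_subset_nonloops_owner[OF i] unfolding color_def by simp
next
  case False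
  then obtain y where "X i = {y}" using singleton_edge[OF i] by blast
  then show ?thesis using color_singleton[OF i False] by simp
qed

lemma rank_color_edge:
  assumes i: "i \<in> I"
  shows "N (color i) (X i) \<le> int (t i)"
proof (cases "2 \<le> card (X i)")
  case True
  then show ?thesis using rank_owner[OF i True, of "X i"] unfolding color_def by simp
next
  case False
  then obtain y where "X i = {y}" using singleton_edge[OF i] by blast
  then have "card (X i) = 1" "t i = 1" using threshold_singleton_edge[OF i] by simp_all
  then show ?thesis using rank_le_card[OF matroid_N[OF color_class[OF i]] edge_subset[OF i]] by simp
qed

lemma color_ne:
  assumes l: "l \<in> I" "x \<in> X l" and l': "l' \<in> I" "x \<in> X l'" and ne: "l \<noteq> l'"
  shows "color l \<noteq> color l'"
proof -
  have the: "X m = {x}" "the_elem (X m) = x" if "m \<in> I" "x \<in> X m" "\<not> 2 \<le> card (X m)" for m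
    using singleton_edge_mem[OF that(1,3,2)] by simp_all
  consider "2 \<le> card (X l)" "2 \<le> card (X l')" | "\<not> 2 \<le> card (X l)" | "\<not> 2 \<le> card (X l')" by blast
  then show ?thesis
  proof cases
    case 1
    then show ?thesis using owners_distinct[OF l(1) _ l'(1) _ ne l(2) l'(2)] unfolding color_def by simp
  next
    case 2
    show ?thesis
    proof (cases "2 \<le> card (X l')")
      case True
      then show ?thesis using color_singleton[OF l(1) 2] the[OF l 2] l' unfolding color_def by auto
    next
      case False
      then have "X l = X l'" using the(1)[OF l 2] the(1)[OF l' False] by simp
      then show ?thesis using inj_on_contraD[OF inj_edges ne l(1) l'(1)] by simp
    qed
  next
    case 3
    show ?thesis
    proof (cases "2 \<le> card (X l)")
      case True
      then show ?thesis using color_singleton[OF l'(1) 3] the[OF l' 3] l unfolding color_def by auto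
    next
      case False
      then have "X l = X l'" using the(1)[OF l False] the(1)[OF l' 3] by simp
      then show ?thesis using inj_on_contraD[OF inj_edges ne l(1) l'(1)] by simp
    qed
  qed
qed

lemma color_cover:
  assumes c: "c \<in> J" and x: "x \<in> NL c"
  shows "\<exists>i\<in>I. x \<in> X i \<and> color i = c"
proof -
  let ?T = "{l\<in>I. x \<in> X l}"
  have xE: "x \<in> E" using x unfolding nonloops_def by blast
  have "inj_on color ?T"
  proof (rule inj_onI)
    fix l l' assume "l \<in> ?T" "l' \<in> ?T" "color l = color l'"
    then show "l = l'" using color_ne[of l x l'] by auto
  qed
  then have "card (color ` ?T) = card {c\<in>J. x \<in> NL c}"
    using card_image card_nonloop_classes[OF xE] unfolding hweight_def by simp
  moreover have "color ` ?T \<subseteq> {c\<in>J. x \<in> NL c}"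
    using color_class edge_subset_nonloops_color by auto
  ultimately have "color ` ?T = {c\<in>J. x \<in> NL c}"
    using card_subset_eq[of "{c\<in>J. x \<in> NL c}" "color ` ?T"] by simp
  then have "c \<in> color ` ?T" using c x by simp
  then show ?thesis by auto
qed

lemma rank_le_class_rank:
  assumes c: "c \<in> J" and A: "A \<subseteq> E"
  shows "N c A \<le> class_rank color c A"
proof -
  let ?F = "{i\<in>I. color i = c}"
  have "N c A = N c (A \<inter> NL c)" using rank_restrict_nonloops[OF matroid_N[OF c] finite_ground A] .
  also have "\<dots> \<le> N c (\<Union>i\<in>?F. A \<inter> X i)"
  proof (rule rank_N_mono[OF c])
    show "A \<inter> NL c \<subseteq> (\<Union>i\<in>?F. A \<inter> X i)" using color_cover[OF c] by blast
  qed (use A in blast)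
  also have "\<dots> \<le> (\<Sum>i\<in>?F. N c (A \<inter> X i))"
    using A by (intro rank_UN_le[OF matroid_N[OF c]]) auto
  also have "\<dots> \<le> (\<Sum>i\<in>?F. int (min (card (A \<inter> X i)) (t i)))"
  proof (rule sum_mono)
    fix i assume i: "i \<in> ?F"
    have "A \<inter> X i \<subseteq> E" using A by blast
    moreover have "N c (A \<inter> X i) \<le> N c (X i)" using edge_subset i by (intro rank_N_mono[OF c]) auto
    ultimately show "N c (A \<inter> X i) \<le> int (min (card (A \<inter> X i)) (t i))"
      using rank_color_edge[of i] rank_le_card[OF matroid_N[OF c], of "A \<inter> X i"] i A by auto
  qed
  finally show ?thesis unfolding class_rank_def using A by simp
qed

lemma rank_eq_class_rank:
  assumes c: "c \<in> J"
  shows "N c = class_rank color c"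
proof
  fix A
  show "N c A = class_rank color c A"
  proof (cases "A \<subseteq> E")
    case True
    have "color ` I \<subseteq> J" using color_class by blast
    then have "(\<Sum>c\<in>J. N c A) = (\<Sum>c\<in>J. class_rank color c A)"
      using rho_eq_sum[OF True] sum_class_rank[of color k A] True by simp
    then show ?thesis
      using sum_mono_inv[of "\<lambda>c. N c A" J] rank_le_class_rank True c by blast
  next
    case False
    then show ?thesis using rank_outside[OF matroid_N[OF c]] unfolding class_rank_def by simp
  qed
qed

end

section \<open>Decompositions from colorings\<close>

lemma proper_colorings_0: "1 \<le> n \<Longrightarrow> proper_colorings n X 0 = {}"
  unfolding proper_colorings_def by (force simp: PiE_iff)

lemma min_card_inter_submod:
  assumes "finite Y"
  shows "min (card ((A \<union> B) \<inter> Y)) s + min (card ((A \<inter> B) \<inter> Y)) s \<le>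
    min (card (A \<inter> Y)) s + min (card (B \<inter> Y)) s"
proof -
  have "card ((A \<inter> Y) \<union> (B \<inter> Y)) + card ((A \<inter> Y) \<inter> (B \<inter> Y)) = card (A \<inter> Y) + card (B \<inter> Y)"
    using assms by (intro card_Un_Int[symmetric]) auto
  moreover have "(A \<inter> Y) \<union> (B \<inter> Y) = (A \<union> B) \<inter> Y" "(A \<inter> Y) \<inter> (B \<inter> Y) = (A \<inter> B) \<inter> Y" by blast+
  moreover have "card ((A \<inter> B) \<inter> Y) \<le> card (A \<inter> Y)" "card ((A \<inter> B) \<inter> Y) \<le> card (B \<inter> Y)"
    using assms by (auto intro: card_mono)
  ultimately show ?thesis by (simp add: min_def)
qed

lemma sum_list_eq_sum_nth:
  assumes "length Ns = k"
  shows "(\<Sum>N\<leftarrow>Ns. N A) = (\<Sum>j\<in>{1..k}. (Ns ! (j - 1)) A)"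
proof -
  have "(\<Sum>N\<leftarrow>Ns. N A) = (\<Sum>j<k. (Ns ! j) A)"
    using assms by (simp add: sum_list_sum_nth atLeast0LessThan)
  also have "\<dots> = (\<Sum>j\<in>{1..k}. (Ns ! (j - 1)) A)"
    by (rule sum.reindex_bij_witness[of _ "\<lambda>j. j - 1" Suc]) auto
  finally show ?thesis .
qed

context thresholded_hypergraph
begin

lemma proper_coloring_range: "col \<in> proper_colorings n X k \<Longrightarrow> i \<in> I \<Longrightarrow> col i \<in> {1..k}"
  unfolding proper_colorings_def by auto

lemma proper_coloring_disjoint:
  assumes "col \<in> proper_colorings n X k" "i \<in> I" "i' \<in> I" "i \<noteq> i'" "col i = col i'"
  shows "X i \<inter> X i' = {}"
  using assms unfolding proper_colorings_def line_adj_def by blast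

context
  fixes col k assumes col: "col \<in> proper_colorings n X k"
begin

lemma class_rank_matroid: "matroid_rank E (class_rank col c)"
proof -
  let ?F = "{i\<in>I. col i = c}"
  define f where "f A = (\<Sum>i\<in>?F. int (min (card (A \<inter> X i)) (t i)))" for A
  have class_rank: "class_rank col c A = (if A \<subseteq> E then f A else 0)" for A
    unfolding class_rank_def f_def by simp
  have "f A \<le> int (card A)" if "A \<subseteq> E" for A
  proof -
    have "f A \<le> int (\<Sum>i\<in>?F. card (A \<inter> X i))" unfolding f_def by (simp add: sum_mono)
    also have "(\<Sum>i\<in>?F. card (A \<inter> X i)) = card (\<Union>i\<in>?F. A \<inter> X i)"
      using finite_edge proper_coloring_disjoint[OF col] by (intro card_UN_disjoint[symmetric]) auto
    also have "\<dots> \<le> card A" using that finite_subset_ground by (intro card_mono) auto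
    finally show ?thesis by simp
  qed
  moreover have "f A \<le> f B" if "A \<subseteq> B" for A B
    unfolding f_def
  proof (rule sum_mono)
    fix i assume "i \<in> ?F"
    then have "card (A \<inter> X i) \<le> card (B \<inter> X i)" using that finite_edge by (intro card_mono) auto
    then show "int (min (card (A \<inter> X i)) (t i)) \<le> int (min (card (B \<inter> X i)) (t i))" by simp
  qed
  moreover have "f (A \<union> B) + f (A \<inter> B) \<le> f A + f B" for A B
    unfolding f_def sum.distrib[symmetric] using min_card_inter_submod[OF finite_edge]
    by (intro sum_mono) (simp add: of_nat_add[symmetric] del: of_nat_add)
  ultimately show ?thesis
    unfolding matroid_rank_def class_rank f_def by (auto simp: sum_nonneg le_supI)
qed

lemma class_rank_singleton_pos:
  assumes "e \<in> E" "0 < class_rank col c {e}"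
  shows "\<exists>l\<in>I. col l = c \<and> e \<in> X l"
  using assms unfolding class_rank_def by (auto intro: ccontr simp: sum.neutral)

lemma class_rank_own_edge:
  assumes i: "i \<in> I"
  shows "class_rank col (col i) (X i) = int (t i)"
proof -
  have "X i \<inter> X l = {}" if "l \<in> {l\<in>I. col l = col i} - {i}" for l
    using proper_coloring_disjoint[OF col i, of l] that by auto
  then have "class_rank col (col i) (X i) = int (min (card (X i)) (t i))"
    unfolding class_rank_def using i edge_subset[OF i]
    by (simp add: sum.remove[of _ i] sum.neutral)
  then show ?thesis using threshold_le_card i by simp
qed

lemma class_rank_foreign_edge:
  assumes i: "i \<in> I" "col i \<noteq> c" and covered: "X i \<subseteq> (\<Union>l\<in>{l\<in>I. col l = c}. X l)"
  shows "class_rank col c (X i) = int (card (X i))"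
proof -
  let ?F = "{l\<in>I. col l = c}"
  have "min (card (X i \<inter> X l)) (t l) = card (X i \<inter> X l)" if "l \<in> ?F" for l
  proof -
    have "l \<in> I" "i \<noteq> l" using that i(2) by auto
    then show ?thesis using card_edges_inter_le_1[OF i(1)] threshold_pos[of l] by fastforce
  qed
  then have "class_rank col c (X i) = int (\<Sum>l\<in>?F. card (X i \<inter> X l))"
    unfolding class_rank_def using edge_subset[OF i(1)] by simp
  also have "(\<Sum>l\<in>?F. card (X i \<inter> X l)) = card (\<Union>l\<in>?F. X i \<inter> X l)"
    using finite_edge proper_coloring_disjoint[OF col] by (intro card_UN_disjoint[symmetric]) auto
  also have "(\<Union>l\<in>?F. X i \<inter> X l) = X i" using covered by blast
  finally show ?thesis .
qed

end

definition coloring_decomposition :: "nat \<Rightarrow> (nat \<Rightarrow> nat) \<Rightarrow> ('a set \<Rightarrow> int) list" where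
  "coloring_decomposition k col = map (class_rank col) [1..<k + 1]"

lemma coloring_decomposition_nth:
  assumes "j \<in> {1..k}"
  shows "coloring_decomposition k col ! (j - 1) = class_rank col j"
proof -
  have "j - 1 < k" using assms by auto
  then have "j - 1 < length [1..<k + 1]" "[1..<k + 1] ! (j - 1) = j" using assms by (simp_all del: upt_Suc)
  then show ?thesis unfolding coloring_decomposition_def by (simp del: upt_Suc)
qed

lemma length_coloring_decomposition: "length (coloring_decomposition k col) = k"
  unfolding coloring_decomposition_def by simp

lemma recolored_edge_singleton:
  assumes col: "col \<in> proper_colorings n X k" and col': "col' \<in> proper_colorings n X k"
    and same: "\<forall>c\<in>{1..k}. class_rank col c = class_rank col' c"
    and i: "i \<in> I" and recolored: "col i \<noteq> col' i"
  shows "card (X i) = 1 \<and> (\<exists>l\<in>I. l \<noteq> i \<and> col' l = col i \<and> X i \<subseteq> X l)"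
proof -
  let ?c = "col i"
  have c: "?c \<in> {1..k}" using proper_coloring_range[OF col i] .
  have covered: "\<exists>l\<in>I. col' l = ?c \<and> e \<in> X l" if e: "e \<in> X i" for e
  proof -
    have "e \<in> E" using e edge_subset[OF i] by blast
    moreover have "class_rank col ?c {e} \<ge> int (min (card ({e} \<inter> X i)) (t i))"
      unfolding class_rank_def using i \<open>e \<in> E\<close> by (auto intro!: member_le_sum)
    then have "0 < class_rank col' ?c {e}" using e threshold_pos[OF i] same c by simp
    ultimately show ?thesis using class_rank_singleton_pos[OF col'] by blast
  qed
  then have "class_rank col' ?c (X i) = int (card (X i))"
    using class_rank_foreign_edge[OF col' i recolored[symmetric]] by blast
  then have "t i = card (X i)" using class_rank_own_edge[OF col i] same c by simp
  then have "card (X i) = 1"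
    using threshold_less_card[OF i] edge_nonempty[OF i] finite_edge[OF i]
    by (metis One_nat_def card_0_eq less_2_cases nat_less_le not_le)
  moreover obtain e where e: "X i = {e}" using calculation by (rule card_1_singletonE)
  moreover obtain l where "l \<in> I" "col' l = ?c" "e \<in> X l" using covered e by blast
  moreover have "l \<noteq> i" using calculation recolored by auto
  ultimately show ?thesis by auto
qed

lemma coloring_decomposition_inj: "inj_on (coloring_decomposition k) (proper_colorings n X k)"
proof (rule inj_onI)
  fix col col' assume col: "col \<in> proper_colorings n X k" and col': "col' \<in> proper_colorings n X k"
    and eq: "coloring_decomposition k col = coloring_decomposition k col'"
  then have same: "\<forall>c\<in>{1..k}. class_rank col c = class_rank col' c"
    using coloring_decomposition_nth by metis
  have "col i = col' i" if i: "i \<in> I" for i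
  proof (rule ccontr)
    assume recolored: "col i \<noteq> col' i"
    obtain l where l: "l \<in> I" "l \<noteq> i" "col' l = col i" "X i \<subseteq> X l" and "card (X i) = 1"
      using recolored_edge_singleton[OF col col' same i recolored] by blast
    then have "X i \<inter> X l \<noteq> {}" using edge_nonempty[OF i] by blast
    then have "col i \<noteq> col l" using proper_coloring_disjoint[OF col i l(1) l(2)[symmetric]] by blast
    then have "col l \<noteq> col' l" using l(3) by simp
    then have "card (X l) = 1"
      using recolored_edge_singleton[OF col' col _ l(1)] same by auto
    then have "X i = X l" using \<open>card (X i) = 1\<close> l(4) finite_edge[OF l(1)] card_subset_eq by metis
    then show False using inj_on_contraD[OF inj_edges l(2)[symmetric] i l(1)] by simp
  qed
  moreover have "col \<in> extensional I" "col' \<in> extensional I"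
    using col col' unfolding proper_colorings_def by (auto simp: PiE_def)
  ultimately show "col = col'" using extensionalityI[of col I col'] by blast
qed

context
  fixes \<rho> :: "'a set \<Rightarrow> int" assumes rho_agrees: "\<forall>A. A \<subseteq> E \<longrightarrow> \<rho> A = rho A"
begin

lemma coloring_decomposition_in_Delta:
  assumes col: "col \<in> proper_colorings n X k"
  shows "coloring_decomposition k col \<in> Delta E \<rho> k"
proof -
  have "N \<in> set (coloring_decomposition k col) \<Longrightarrow> matroid_rank E N" for N
    using class_rank_matroid[OF col] unfolding coloring_decomposition_def by auto
  moreover have "\<rho> A = (\<Sum>N\<leftarrow>coloring_decomposition k col. N A)" if "A \<subseteq> E" for A
  proof -
    have "(\<Sum>N\<leftarrow>coloring_decomposition k col. N A) = (\<Sum>j\<in>{1..k}. class_rank col j A)"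
      using coloring_decomposition_nth
      by (simp add: sum_list_eq_sum_nth[OF length_coloring_decomposition])
    also have "\<dots> = rho A" using proper_coloring_range[OF col] that by (intro sum_class_rank) auto
    finally show ?thesis using rho_agrees that by simp
  qed
  ultimately show ?thesis unfolding Delta_def using length_coloring_decomposition by blast
qed

lemma coloring_decomposition_surj:
  assumes Ns: "Ns \<in> Delta E \<rho> k"
  shows "Ns \<in> coloring_decomposition k ` proper_colorings n X k"
proof -
  define N where "N j = Ns ! (j - 1)" for j
  have len: "length Ns = k" using Ns unfolding Delta_def by blast
  have "rho_decomposition E n X t k N"
  proof (unfold_locales)
    fix j assume "j \<in> {1..k}"
    then have "N j \<in> set Ns" using len unfolding N_def by auto
    then show "matroid_rank E (N j)" using Ns unfolding Delta_def by blast
  next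
    fix A assume "A \<subseteq> E"
    then show "rho A = (\<Sum>j\<in>{1..k}. N j A)"
      using Ns rho_agrees sum_list_eq_sum_nth[OF len] unfolding Delta_def N_def by simp
  qed
  then interpret decomposition: rho_decomposition E n X t k N .
  define col where "col = restrict decomposition.color I"
  have "col \<in> proper_colorings n X k"
    unfolding proper_colorings_def line_adj_def col_def
    using decomposition.color_class decomposition.color_ne by auto
  moreover have "coloring_decomposition k col = Ns"
  proof (rule nth_equalityI)
    show "length (coloring_decomposition k col) = length Ns"
      using len length_coloring_decomposition by simp
    fix j assume "j < length (coloring_decomposition k col)"
    then have j: "j + 1 \<in> {1..k}" using length_coloring_decomposition by simp
    have classes: "{i\<in>I. col i = j + 1} = {i\<in>I. decomposition.color i = j + 1}"
      unfolding col_def by auto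
    have "class_rank col (j + 1) = class_rank decomposition.color (j + 1)"
      unfolding class_rank_def classes by (rule refl)
    then show "coloring_decomposition k col ! j = Ns ! j"
      using coloring_decomposition_nth[OF j] decomposition.rank_eq_class_rank[OF j]
      unfolding N_def by simp
  qed
  ultimately show ?thesis by blast
qed

lemma bij_betw_coloring_decomposition:
  "bij_betw (coloring_decomposition k) (proper_colorings n X k) (Delta E \<rho> k)"
  using coloring_decomposition_inj coloring_decomposition_in_Delta coloring_decomposition_surj
  by (intro bij_betw_imageI) auto

end

end

theorem theorem2p7:
  fixes E :: "'a set" and n :: nat and X :: "nat \<Rightarrow> 'a set" and t :: "nat \<Rightarrow> nat"
    and \<rho> :: "'a set \<Rightarrow> int"
  assumes hyp: "hypergraph E n X"
    and t_le: "\<forall>i\<in>{1..n}. t i \<le> card (X i)"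
    and H2: "\<forall>i\<in>{1..n}. \<forall>j\<in>{1..n}. i \<noteq> j \<longrightarrow> card (X i \<inter> X j) \<le> 1"
    and H3: "\<not> (\<exists>a\<in>E. \<exists>b\<in>E. \<exists>c\<in>E. a \<noteq> b \<and> a \<noteq> c \<and> b \<noteq> c \<and>
               {a, b} \<in> hyperedges n X \<and> {a, c} \<in> hyperedges n X \<and> {b, c} \<in> hyperedges n X)"
    and T: "\<forall>i\<in>{1..n}. t i = 1 \<or>
               (Min (hweight n X ` X i) \<le> t i \<and> t i < card (X i))"
    and rho: "\<forall>A. A \<subseteq> E \<longrightarrow> \<rho> A = (\<Sum>i=1..n. int (min (card (A \<inter> X i)) (t i)))"
  shows "(\<forall>k>0. \<exists>f. bij_betw f (proper_colorings n X k) (Delta E \<rho> k))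
       \<and> (n \<ge> 1 \<longrightarrow> (LEAST k. 0 < k \<and> decomposable E k \<rho>) = chromatic_number n X)
       \<and> (\<forall>k>0. card (Delta E \<rho> k) = chromatic_poly n X k)"
proof -
  interpret thresholded_hypergraph E n X t
    unfolding thresholded_hypergraph_def using hyp t_le H2 H3 T by blast
  have bij: "bij_betw (coloring_decomposition k) (proper_colorings n X k) (Delta E \<rho> k)" for k
    using bij_betw_coloring_decomposition rho unfolding rho_def by simp
  then have "decomposable E k \<rho> \<longleftrightarrow> proper_colorings n X k \<noteq> {}" for k
    unfolding decomposable_def bij_betw_def by blast
  then have "(0 < k \<and> decomposable E k \<rho>) \<longleftrightarrow> proper_colorings n X k \<noteq> {}" if "1 \<le> n" for k
    using proper_colorings_0[OF that] by (cases k) auto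
  then have "1 \<le> n \<Longrightarrow> (LEAST k. 0 < k \<and> decomposable E k \<rho>) = chromatic_number n X"
    unfolding chromatic_number_def by simp
  moreover have "card (Delta E \<rho> k) = chromatic_poly n X k" for k
    using bij_betw_same_card[OF bij] unfolding chromatic_poly_def by simp
  ultimately show ?thesis using bij by auto
qed

end
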